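(* Let $(\mathbf X_1,\mathbf Y_1)$ and $(\mathbf X_2,\mathbf Y_2)$ be general correlated sources, both uniformly integrable, with identical marginals $\mathbf X_1=\mathbf X_2$ (i.e. $P_{X_1^n}=P_{X_2^n}$ for all $n$), and let $(\mathbf X,\mathbf Y)$ be their mixture $P_{X^nY^n}=\alpha_1P_{X_1^nY_1^n}+\alpha_2P_{X_2^nY_2^n}$ with $\alpha_1,\alpha_2>0$, $\alpha_1+\alpha_2=1$. Then \[\overline H_s(\mathbf X|\mathbf Y)=\lim_{\varepsilon\downarrow0}\limsup_{n\to\infty}\frac1n\sum_{x^n\in\mathcal X^n}P_{X^n}(x^n)\Big[\max_{i=1,2}\overline h_i^\varepsilon(x^n)\Big].\]
   Context: A general correlated source $\{(X^n,Y^n)\}_{n\ge1}$ is an arbitrary sequence of pairs of random variables on $\mathcal X^n\times\mathcal Y^n$, $\mathcal X,\mathcal Y$ finite or countably infinite (no structural assumptions; marginal probabilities positive). Logs base 2. A source is uniformly integrable if $Z_n=\frac1n\log\frac1{P_{X^n|Y^n}(X^n|Y^n)}$ satisfies $\lim_{u\to\infty}\sup_n\sum_{z:|z|\ge u}P_{Z_n}(z)|z|=0$. For a source with distributions $P_{X^nY^n}$, $x^n$ and $\varepsilon\in(0,1]$: $\overline h^\varepsilon(x^n|P_{X^nY^n})=\inf\{a\in\mathbb R:\sum_{y^n:\log(1/P_{X^n|Y^n}(x^n|y^n))>a}P_{Y^n|X^n}(y^n|x^n)\le\varepsilon\}$; $\overline h_i^\varepsilon(x^n)=\overline h^\varepsilon(x^n|P_{X_i^nY_i^n})$;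 $\overline H_s^\varepsilon(X^n|Y^n)=\sum_{x^n}P_{X^n}(x^n)\overline h^\varepsilon(x^n|P_{X^nY^n})$; $\overline H_s(\mathbf X|\mathbf Y)=\lim_{\varepsilon\downarrow0}\limsup_n\frac1n\overline H_s^\varepsilon(X^n|Y^n)$. *)

theory Defs
  imports "HOL-Probability.Probability"
begin

text \<open>A general correlated source: for each n a joint pmf on X^n x Y^n,
  where X^n, Y^n are the length-n lists over countable alphabets (types).\<close>

definition is_source :: "(nat \<Rightarrow> ('x::countable list \<times> 'y::countable list) pmf) \<Rightarrow> bool" where
  "is_source P \<longleftrightarrow> (\<forall>n. set_pmf (P n) \<subseteq> {(xs, ys). length xs = n \<and> length ys = n}
      \<and> (\<forall>xs. length xs = n \<longrightarrow> pmf (map_pmf fst (P n)) xs > 0)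
      \<and> (\<forall>ys. length ys = n \<longrightarrow> pmf (map_pmf snd (P n)) ys > 0))"

definition condXY :: "('x \<times> 'y) pmf \<Rightarrow> 'x \<Rightarrow> 'y \<Rightarrow> real" where
  "condXY Q x y = pmf Q (x, y) / pmf (map_pmf snd Q) y"

definition condYX :: "('x \<times> 'y) pmf \<Rightarrow> 'y \<Rightarrow> 'x \<Rightarrow> real" where
  "condYX Q y x = pmf Q (x, y) / pmf (map_pmf fst Q) x"

definition Zdist :: "(nat \<Rightarrow> ('x \<times> 'y) pmf) \<Rightarrow> nat \<Rightarrow> real pmf" where
  "Zdist P n = map_pmf (\<lambda>(x, y). (1 / real n) * log 2 (1 / condXY (P n) x y)) (P n)"

definition unif_integrable :: "(nat \<Rightarrow> ('x \<times> 'y) pmf) \<Rightarrow> bool" where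
  "unif_integrable P \<longleftrightarrow>
     ((\<lambda>u::real. SUP n\<in>{1..}. (\<Sum>\<^sub>\<infinity> z\<in>{z. \<bar>z\<bar> \<ge> u}. ennreal (pmf (Zdist P n) z * \<bar>z\<bar>)))
        \<longlongrightarrow> 0) at_top"

definition hbar :: "real \<Rightarrow> ('x \<times> 'y) pmf \<Rightarrow> 'x \<Rightarrow> real" where
  "hbar \<epsilon> Q x = Inf {a::real.
      (\<Sum>\<^sub>\<infinity> y. if log 2 (1 / condXY Q x y) > a then condYX Q y x else 0) \<le> \<epsilon>}"

definition Hs_eps :: "real \<Rightarrow> (nat \<Rightarrow> ('x list \<times> 'y) pmf) \<Rightarrow> nat \<Rightarrow> real" where
  "Hs_eps \<epsilon> P n = (\<Sum>\<^sub>\<infinity> x\<in>{xs. length xs = n}. pmf (map_pmf fst (P n)) x * hbar \<epsilon> (P n) x)"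

definition Hs :: "(nat \<Rightarrow> ('x list \<times> 'y) pmf) \<Rightarrow> ereal" where
  "Hs P = Lim (at_right (0::real)) (\<lambda>\<epsilon>. limsup (\<lambda>n. ereal (Hs_eps \<epsilon> P n / real n)))"

end

theory Submission
  imports Defs
begin

text \<open>Because the first marginals coincide, for fixed x the conditional law of Y under the mixture
  is the same mixture of the conditional laws of the components. Wherever the relevant likelihood
  ratio is at most t, the information density of the mixture and that of a component differ by at
  most log t - log alpha_i, and by Markov's inequality the ratio exceeds t only with probability at
  most 1/t. This bounds each component's quantile at level epsilon' by the mixture's quantile at a
  smaller level, and the mixture's quantile at level epsilon by the larger component quantile at
  level epsilon/2, up to O(log t), except on a set of x of probability O(1/(epsilon t)). On that
  set the quantile is bounded by the conditional mean of the information density, which uniform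
  integrability makes small per unit of probability. Taking t = n and dividing by n, the two
  limsup families are antitone in epsilon and dominate each other at rescaled levels, hence have
  the same limit as epsilon tends to 0.\<close>

section \<open>Discrete probability\<close>

lemma pmf_le_pmf_map_fst: "pmf M (x, y) \<le> pmf (map_pmf fst M) x"
proof -
  have "pmf M (x, y) = measure M {(x, y)}" by (simp add: measure_pmf_single)
  also have "\<dots> \<le> measure M (fst -` {x})"
    by (intro measure_pmf.finite_measure_mono) auto
  finally show ?thesis by (simp add: pmf_map)
qed

lemma pmf_le_pmf_map_snd: "pmf M (x, y) \<le> pmf (map_pmf snd M) y"
proof -
  have "pmf M (x, y) = measure M {(x, y)}" by (simp add: measure_pmf_single)
  also have "\<dots> \<le> measure M (snd -` {y})"
    by (intro measure_pmf.finite_measure_mono) auto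
  finally show ?thesis by (simp add: pmf_map)
qed

lemma nn_integral_pmf_mixture:
  assumes "\<And>z. pmf R z = a1 * pmf R1 z + a2 * pmf R2 z" "a1 \<ge> 0" "a2 \<ge> 0"
  shows "(\<integral>\<^sup>+z. f z \<partial>R) = ennreal a1 * (\<integral>\<^sup>+z. f z \<partial>R1) + ennreal a2 * (\<integral>\<^sup>+z. f z \<partial>R2)"
proof -
  have "(\<integral>\<^sup>+z. f z \<partial>R) = (\<integral>\<^sup>+z. ennreal a1 * (ennreal (pmf R1 z) * f z)
                                 + ennreal a2 * (ennreal (pmf R2 z) * f z) \<partial>count_space UNIV)"
    unfolding nn_integral_measure_pmf
    by (intro nn_integral_cong) (simp add: assms ennreal_plus ennreal_mult distrib_right mult.assoc)
  also have "\<dots> = ennreal a1 * (\<integral>\<^sup>+z. f z \<partial>R1) + ennreal a2 * (\<integral>\<^sup>+z. f z \<partial>R2)"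
    unfolding nn_integral_measure_pmf by (subst nn_integral_add) (auto simp: nn_integral_cmult)
  finally show ?thesis .
qed

lemma measure_pmf_mixture:
  assumes "\<And>z. pmf R z = a1 * pmf R1 z + a2 * pmf R2 z" "a1 \<ge> 0" "a2 \<ge> 0"
  shows "measure R A = a1 * measure R1 A + a2 * measure R2 A"
proof -
  have "ennreal (measure R A) = ennreal a1 * ennreal (measure R1 A) + ennreal a2 * ennreal (measure R2 A)"
    using nn_integral_pmf_mixture[OF assms, of "indicator A"]
    by (simp add: measure_pmf.emeasure_eq_measure[symmetric])
  also have "\<dots> = ennreal (a1 * measure R1 A + a2 * measure R2 A)"
    using assms by (simp add: ennreal_plus ennreal_mult)
  finally show ?thesis
    by (subst (asm) ennreal_inj) (auto simp: assms)
qed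

lemma pmf_map_pmf_mixture:
  assumes "\<And>z. pmf R z = a1 * pmf R1 z + a2 * pmf R2 z" "a1 \<ge> 0" "a2 \<ge> 0"
  shows "pmf (map_pmf f R) y = a1 * pmf (map_pmf f R1) y + a2 * pmf (map_pmf f R2) y"
  by (simp add: pmf_map measure_pmf_mixture[OF assms])

lemma log2_le_divide_ln2:
  assumes "z > 0" shows "log 2 z \<le> z / ln 2"
proof -
  have "ln z \<le> z" using ln_le_minus_one[OF assms] by simp
  then show ?thesis unfolding log_def by (simp add: divide_right_mono)
qed

lemma measure_pmf_Markov_inequality:
  fixes M :: "'a pmf"
  assumes fin: "(\<integral>\<^sup>+ y. ennreal (f y) \<partial>M) \<noteq> \<infinity>" and a: "a > 0"
  shows "a * measure M {y. a \<le> f y} \<le> enn2real (\<integral>\<^sup>+ y. ennreal (f y) \<partial>M)"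
proof -
  have "ennreal (a * measure M {y. a \<le> f y}) = (\<integral>\<^sup>+ y. ennreal a * indicator {y. a \<le> f y} y \<partial>M)"
    using a by (subst nn_integral_cmult_indicator)
      (auto simp: ennreal_mult measure_pmf.emeasure_eq_measure)
  also have "\<dots> \<le> (\<integral>\<^sup>+ y. ennreal (f y) \<partial>M)"
    by (intro nn_integral_mono) (auto simp: indicator_def intro: ennreal_leI)
  finally have "enn2real (ennreal (a * measure M {y. a \<le> f y})) \<le> enn2real (\<integral>\<^sup>+ y. ennreal (f y) \<partial>M)"
    using fin by (intro enn2real_mono) (auto simp: less_top)
  then show ?thesis using a by simp
qed

lemma measure_pmf_likelihood_ratio_gt:
  fixes M N :: "'a pmf"
  assumes t: "t > 0"
  shows "measure M {y. pmf N y > t * pmf M y} \<le> 1 / t"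
proof -
  let ?S = "{y. pmf N y > t * pmf M y}"
  have "ennreal (t * measure M ?S)
      = (\<integral>\<^sup>+ y. ennreal t * (ennreal (pmf M y) * indicator ?S y) \<partial>count_space UNIV)"
    using t by (simp add: nn_integral_cmult ennreal_mult nn_integral_measure_pmf[symmetric]
        measure_pmf.emeasure_eq_measure)
  also have "\<dots> \<le> (\<integral>\<^sup>+ y. ennreal (pmf N y) \<partial>count_space UNIV)"
    using t by (intro nn_integral_mono)
      (auto simp: indicator_def ennreal_mult[symmetric] intro!: ennreal_leI)
  also have "\<dots> = 1" by (simp add: nn_integral_pmf)
  finally have "t * measure M ?S \<le> 1"
    by (simp add: ennreal_le_1 del: ennreal_1)
  then show ?thesis using t by (simp add: field_simps)
qed

lemma nn_integral_indicator_le_infsum: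
  fixes g :: "'a \<Rightarrow> real"
  assumes g0: "\<And>w. g w \<ge> 0"
  shows "(\<integral>\<^sup>+ w. ennreal (g w) * indicator S w \<partial>count_space UNIV) \<le> (\<Sum>\<^sub>\<infinity> w\<in>S. ennreal (g w))"
proof (cases "(\<Sum>\<^sub>\<infinity> w\<in>S. ennreal (g w)) = \<infinity>")
  case False
  define I where "I = (\<Sum>\<^sub>\<infinity> w\<in>S. ennreal (g w))"
  have finite_sums: "sum g F \<le> enn2real I" if "finite F" "F \<subseteq> S" for F
  proof -
    have "ennreal (sum g F) = sum (\<lambda>w. ennreal (g w)) F" using g0 by (simp add: sum_ennreal)
    also have "\<dots> \<le> I"
      unfolding I_def nonneg_infsum_complete[OF zero_le] using that by (intro SUP_upper) auto
    finally have "enn2real (ennreal (sum g F)) \<le> enn2real I"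
      using False by (intro enn2real_mono) (auto simp: I_def less_top)
    then show ?thesis using g0 by (simp add: sum_nonneg)
  qed
  have abs: "Infinite_Set_Sum.abs_summable_on g S"
    by (rule abs_summable_finite_sumsI[where B="enn2real I"]) (use finite_sums g0 in auto)
  have summable: "g summable_on S"
    using abs abs_summable_equivalent[of g S] g0 by (simp add: abs_of_nonneg)
  have "(\<integral>\<^sup>+ w. ennreal (g w) * indicator S w \<partial>count_space UNIV) = (\<integral>\<^sup>+ w. ennreal (g w) \<partial>count_space S)"
    by (simp add: nn_integral_count_space_indicator)
  also have "\<dots> = ennreal (infsetsum g S)"
    using abs g0 by (intro nn_integral_conv_infsetsum) auto
  also have "\<dots> = ennreal (infsum g S)" using abs by (simp add: infsetsum_infsum)
  also have "\<dots> = (\<Sum>\<^sub>\<infinity> w\<in>S. ennreal (g w))"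
    by (rule infsum_comm_additive_general[symmetric, unfolded o_def])
      (use g0 summable in \<open>auto simp: sum_ennreal\<close>)
  finally show ?thesis by simp
qed simp

lemma infsum_pmf_mult_eq_nn_integral:
  fixes M :: "'a pmf"
  assumes nonneg: "\<And>x. pmf M x > 0 \<Longrightarrow> h x \<ge> 0" and outside: "\<And>x. x \<notin> A \<Longrightarrow> pmf M x = 0"
    and fin: "(\<integral>\<^sup>+ x. ennreal (h x) \<partial>M) \<noteq> \<infinity>"
  shows "(\<Sum>\<^sub>\<infinity> x\<in>A. pmf M x * h x) = enn2real (\<integral>\<^sup>+ x. ennreal (h x) \<partial>M)"
proof -
  define g where "g x = pmf M x * h x" for x
  have g0: "g x \<ge> 0" for x
    using nonneg[of x] by (cases "pmf M x > 0") (auto simp: g_def not_less)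
  have eq: "(\<integral>\<^sup>+ x. ennreal (h x) \<partial>M) = (\<integral>\<^sup>+ x. ennreal (g x) \<partial>count_space UNIV)"
    unfolding nn_integral_measure_pmf
  proof (rule nn_integral_cong)
    fix x
    show "ennreal (pmf M x) * ennreal (h x) = ennreal (g x)"
      using nonneg[of x] by (cases "pmf M x > 0") (auto simp: g_def ennreal_mult not_less)
  qed
  have "integrable (count_space UNIV) g"
    using fin g0 unfolding eq by (intro integrableI_nonneg) (auto simp: less_top)
  then have "infsum g UNIV = enn2real (\<integral>\<^sup>+ x. ennreal (g x) \<partial>count_space UNIV)"
    using g0 by (simp add: infsetsum_infsum[symmetric] abs_summable_on_def infsetsum_def
        integral_eq_nn_integral)
  moreover have "infsum g A = infsum g UNIV"
    using outside by (intro infsum_cong_neutral) (auto simp: g_def)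
  ultimately show ?thesis unfolding eq by (simp add: g_def[abs_def])
qed

section \<open>Limits\<close>

lemma Limsup_le_Limsup_add_tendsto:
  fixes a b e :: "nat \<Rightarrow> real"
  assumes "eventually (\<lambda>n. a n \<le> b n + e n) sequentially" and "e \<longlonglongrightarrow> l"
  shows "limsup (\<lambda>n. ereal (a n)) \<le> limsup (\<lambda>n. ereal (b n)) + ereal l"
proof -
  have "limsup (\<lambda>n. ereal (a n)) \<le> limsup (\<lambda>n. ereal (b n) + ereal (e n))"
    by (rule Limsup_mono) (use assms(1) in \<open>auto elim!: eventually_mono\<close>)
  also have "\<dots> \<le> limsup (\<lambda>n. ereal (b n)) + limsup (\<lambda>n. ereal (e n))"
    by (rule ereal_limsup_add_mono)
  also have "limsup (\<lambda>n. ereal (e n)) = ereal l"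
    using assms(2) by (intro lim_imp_Limsup) (auto simp: tendsto_ereal)
  finally show ?thesis .
qed

lemma tendsto_at_right_0_SUP_if_antimono:
  fixes h :: "real \<Rightarrow> ereal"
  assumes anti: "\<And>x y. 0 < x \<Longrightarrow> x \<le> y \<Longrightarrow> y < 1 \<Longrightarrow> h y \<le> h x"
  shows "(h \<longlongrightarrow> (SUP x\<in>{0<..<1}. h x)) (at_right 0)"
proof (rule order_tendstoI)
  fix a assume "a < (SUP x\<in>{0<..<1}. h x)"
  then obtain x0 where x0: "x0 \<in> {0<..<1}" "a < h x0" by (auto simp: less_SUP_iff)
  show "eventually (\<lambda>x. a < h x) (at_right 0)"
    unfolding eventually_at_right_field
  proof (intro exI[of _ x0] conjI allI impI)
    show "0 < x0" using x0 by simp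
    fix y :: real assume "0 < y" "y < x0"
    then have "h x0 \<le> h y" using x0 by (intro anti) auto
    then show "a < h y" using x0 by simp
  qed
next
  fix a assume a: "(SUP x\<in>{0<..<1}. h x) < a"
  show "eventually (\<lambda>x. h x < a) (at_right 0)"
    unfolding eventually_at_right_field
  proof (intro exI[of _ 1] conjI allI impI)
    fix y :: real assume "0 < y" "y < 1"
    then have "h y \<le> (SUP x\<in>{0<..<1}. h x)" by (intro SUP_upper) auto
    then show "h y < a" using a by simp
  qed simp
qed

lemma SUP_le_SUP_if_dominated:
  fixes f g :: "'a \<Rightarrow> 'b::complete_lattice"
  assumes "\<And>x. x \<in> A \<Longrightarrow> \<exists>y\<in>A. f x \<le> g y"
  shows "(SUP x\<in>A. f x) \<le> (SUP x\<in>A. g x)"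
proof (rule SUP_least)
  fix x assume "x \<in> A"
  then obtain y where "y \<in> A" "f x \<le> g y" using assms by blast
  then show "f x \<le> (SUP x\<in>A. g x)" by (blast intro: order_trans SUP_upper)
qed

lemma Lim_at_right_0_eq_if_interleaved:
  fixes g k :: "real \<Rightarrow> ereal"
  assumes "\<And>x y. 0 < x \<Longrightarrow> x \<le> y \<Longrightarrow> y < 1 \<Longrightarrow> g y \<le> g x"
    and "\<And>x y. 0 < x \<Longrightarrow> x \<le> y \<Longrightarrow> y < 1 \<Longrightarrow> k y \<le> k x"
    and "\<And>x. x \<in> {0<..<1} \<Longrightarrow> \<exists>y\<in>{0<..<1}. g x \<le> k y"
    and "\<And>x. x \<in> {0<..<1} \<Longrightarrow> \<exists>y\<in>{0<..<1}. k x \<le> g y"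
  shows "Lim (at_right 0) g = Lim (at_right 0) k"
proof -
  have "Lim (at_right 0) g = (SUP x\<in>{0<..<1}. g x)"
    by (rule tendsto_Lim[OF _ tendsto_at_right_0_SUP_if_antimono[OF assms(1)]]) simp
  also have "\<dots> = (SUP x\<in>{0<..<1}. k x)"
    by (rule antisym; rule SUP_le_SUP_if_dominated) (fact assms(3), fact assms(4))
  also have "\<dots> = Lim (at_right 0) k"
    by (rule tendsto_Lim[OF _ tendsto_at_right_0_SUP_if_antimono[OF assms(2)], symmetric]) simp
  finally show ?thesis .
qed

section \<open>Conditional laws and the information spectrum\<close>

text \<open>For x of probability zero this is a junk value.\<close>

definition cond_snd_pmf :: "('a \<times> 'b) pmf \<Rightarrow> 'a \<Rightarrow> 'b pmf" where
  "cond_snd_pmf R x = map_pmf snd (cond_pmf R ({x} \<times> UNIV))"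

lemma pmf_cond_snd_pmf:
  assumes "pmf (map_pmf fst R) x > 0"
  shows "pmf (cond_snd_pmf R x) y = pmf R (x, y) / pmf (map_pmf fst R) x"
proof -
  have "x \<in> fst ` set_pmf R"
    using assms by (simp flip: set_map_pmf add: set_pmf_iff)
  then have ne: "set_pmf R \<inter> ({x} \<times> UNIV) \<noteq> {}" by force
  have "measure R ({x} \<times> UNIV) = measure R (fst -` {x})"
    by (rule arg_cong[where f="measure_pmf.prob R"]) auto
  then have marginal: "measure R ({x} \<times> UNIV) = pmf (map_pmf fst R) x"
    by (simp add: pmf_map)
  let ?C = "cond_pmf R ({x} \<times> UNIV)"
  show ?thesis
  proof (cases "(x, y) \<in> set_pmf R")
    case True
    have "pmf (map_pmf snd ?C) (snd (x, y)) = pmf ?C (x, y)"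
      by (rule pmf_map_inj) (use ne True in \<open>auto simp: inj_on_def\<close>)
    then show ?thesis using ne by (simp add: cond_snd_pmf_def pmf_cond marginal)
  next
    case False
    then have "y \<notin> set_pmf (map_pmf snd ?C)" using ne by auto
    then have "pmf (cond_snd_pmf R x) y = 0" unfolding cond_snd_pmf_def by (meson set_pmf_iff)
    then show ?thesis using False by (simp add: set_pmf_iff)
  qed
qed

lemma nn_integral_cond_snd_pmf:
  "(\<integral>\<^sup>+x. (\<integral>\<^sup>+y. g x y \<partial>cond_snd_pmf R x) \<partial>map_pmf fst R) = (\<integral>\<^sup>+z. g (fst z) (snd z) \<partial>R)"
proof -
  have "ennreal (pmf (map_pmf fst R) x) * (\<integral>\<^sup>+y. g x y \<partial>cond_snd_pmf R x)
      = (\<integral>\<^sup>+y. ennreal (pmf R (x, y)) * g x y \<partial>count_space UNIV)" for x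
  proof (cases "pmf (map_pmf fst R) x > 0")
    case True
    have "ennreal (pmf (map_pmf fst R) x) * (ennreal (pmf (cond_snd_pmf R x) y) * g x y)
        = ennreal (pmf R (x, y)) * g x y" for y
    proof -
      have "pmf (map_pmf fst R) x * pmf (cond_snd_pmf R x) y = pmf R (x, y)"
        using True by (simp add: pmf_cond_snd_pmf)
      then show ?thesis by (metis ennreal_mult' mult.assoc pmf_nonneg)
    qed
    then show ?thesis
      by (simp add: nn_integral_measure_pmf flip: nn_integral_cmult)
  next
    case False
    then have "pmf R (x, y) = 0" for y
      using pmf_le_pmf_map_fst[of R x y] by (simp add: not_less)
    with False show ?thesis by (simp add: not_less)
  qed
  then have "(\<integral>\<^sup>+x. (\<integral>\<^sup>+y. g x y \<partial>cond_snd_pmf R x) \<partial>map_pmf fst R)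
      = (\<integral>\<^sup>+x. (\<integral>\<^sup>+y. ennreal (pmf R (x, y)) * g x y \<partial>count_space UNIV) \<partial>count_space UNIV)"
    by (simp add: nn_integral_measure_pmf[of "map_pmf fst R"] del: nn_integral_map_pmf)
  also have "\<dots> = (\<integral>\<^sup>+z. ennreal (pmf R z) * g (fst z) (snd z) \<partial>count_space UNIV)"
    using nn_integral_fst_count_space[of "\<lambda>z. ennreal (pmf R z) * g (fst z) (snd z)"] by simp
  also have "\<dots> = (\<integral>\<^sup>+z. g (fst z) (snd z) \<partial>R)"
    by (simp add: nn_integral_measure_pmf)
  finally show ?thesis .
qed

lemma infsum_if_pmf_eq_measure: "(\<Sum>\<^sub>\<infinity> y. if P y then pmf M y else 0) = measure M {y. P y}"
proof -
  have "measure M {y. P y} = infsetsum (pmf M) {y. P y}" by (rule measure_pmf_conv_infsetsum)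
  also have "\<dots> = infsum (pmf M) {y. P y}" by (rule infsetsum_infsum) auto
  also have "\<dots> = (\<Sum>\<^sub>\<infinity> y. if P y then pmf M y else 0)"
    by (rule infsum_cong_neutral) auto
  finally show ?thesis by simp
qed

text \<open>hbar is an upper quantile of this information density under the conditional law of y
  given x.\<close>

definition cond_info :: "('a \<times> 'b) pmf \<Rightarrow> 'a \<Rightarrow> 'b \<Rightarrow> real" where
  "cond_info Q x y = log 2 (1 / condXY Q x y)"

definition info_tail :: "('a \<times> 'b) pmf \<Rightarrow> 'a \<Rightarrow> real \<Rightarrow> real" where
  "info_tail Q x a = measure (cond_snd_pmf Q x) {y. cond_info Q x y > a}"

lemma hbar_eq_Inf_info_tail:
  assumes "pmf (map_pmf fst Q) x > 0"
  shows "hbar \<epsilon> Q x = Inf {a. info_tail Q x a \<le> \<epsilon>}"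
proof -
  have cond: "condYX Q y x = pmf (cond_snd_pmf Q x) y" for y
    using assms by (simp add: condYX_def pmf_cond_snd_pmf)
  have tail: "(\<Sum>\<^sub>\<infinity> y. if log 2 (1 / condXY Q x y) > a then condYX Q y x else 0) = info_tail Q x a" for a
    unfolding info_tail_def cond_info_def cond by (rule infsum_if_pmf_eq_measure)
  show ?thesis unfolding hbar_def tail ..
qed

lemma cond_info_eq:
  assumes "pmf Q (x, y) > 0"
  shows "cond_info Q x y = log 2 (pmf (map_pmf snd Q) y) - log 2 (pmf Q (x, y))"
proof -
  have "pmf (map_pmf snd Q) y > 0" using assms pmf_le_pmf_map_snd[of Q x y] by linarith
  then show ?thesis using assms unfolding cond_info_def condXY_def by (simp add: log_divide)
qed

lemma cond_info_nonneg:
  assumes "pmf Q (x, y) > 0" shows "cond_info Q x y \<ge> 0"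
  using assms pmf_le_pmf_map_snd[of Q x y] by (simp add: cond_info_eq)

lemma info_tail_antimono: "a \<le> b \<Longrightarrow> info_tail Q x b \<le> info_tail Q x a"
  unfolding info_tail_def by (auto intro!: measure_pmf.finite_measure_mono)

lemma pmf_pos_if_in_cond_snd_pmf:
  "pmf (map_pmf fst Q) x > 0 \<Longrightarrow> y \<in> set_pmf (cond_snd_pmf Q x) \<Longrightarrow> pmf Q (x, y) > 0"
  by (simp add: set_pmf_iff pmf_cond_snd_pmf)

lemma info_tail_neg:
  assumes "pmf (map_pmf fst Q) x > 0" "a < 0"
  shows "info_tail Q x a = 1"
proof -
  have "set_pmf (cond_snd_pmf Q x) \<subseteq> {y. cond_info Q x y > a}"
    using cond_info_nonneg pmf_pos_if_in_cond_snd_pmf[OF assms(1)] assms(2) by fastforce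
  then show ?thesis
    unfolding info_tail_def by (simp add: measure_pmf.prob_eq_1 AE_measure_pmf_iff subset_eq)
qed

lemma info_tail_tendsto_0: "(\<lambda>k. info_tail Q x (real k)) \<longlonglongrightarrow> 0"
proof -
  have "(\<lambda>k. measure (cond_snd_pmf Q x) {y. cond_info Q x y > real k})
      \<longlonglongrightarrow> measure (cond_snd_pmf Q x) (\<Inter>k. {y. cond_info Q x y > real k})"
    by (intro measure_pmf.finite_Lim_measure_decseq) (auto simp: decseq_def)
  moreover have "(\<Inter>k. {y. cond_info Q x y > real k}) = {}"
  proof -
    have "\<not> (\<forall>k. cond_info Q x y > real k)" for y
    proof -
      obtain n where "cond_info Q x y < real n" using reals_Archimedean2 by blast
      then show ?thesis by (auto intro!: exI[of _ n])
    qed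
    then show ?thesis by auto
  qed
  ultimately show ?thesis unfolding info_tail_def by simp
qed

locale hbar_quantile =
  fixes Q :: "('a \<times> 'b) pmf" and x :: 'a and \<epsilon> :: real
  assumes pos_marginal: "pmf (map_pmf fst Q) x > 0" and eps: "0 < \<epsilon>" "\<epsilon> < 1"
begin

lemma admissible_nonneg: "info_tail Q x a \<le> \<epsilon> \<Longrightarrow> a \<ge> 0"
  using info_tail_neg[OF pos_marginal, of a] eps by force

lemma admissible_nonempty: "{a. info_tail Q x a \<le> \<epsilon>} \<noteq> {}"
proof -
  from info_tail_tendsto_0[of Q x] eps obtain k where "info_tail Q x (real k) < \<epsilon>"
    by (metis (no_types, lifting) eventually_sequentially order_tendstoD(2) order_refl)
  then show ?thesis by (auto intro!: exI[of _ "real k"])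
qed

lemma bdd_below_admissible: "bdd_below {a. info_tail Q x a \<le> \<epsilon>}"
  using admissible_nonneg by (auto simp: bdd_below_def)

lemma hbar_le: "info_tail Q x a \<le> \<epsilon> \<Longrightarrow> hbar \<epsilon> Q x \<le> a"
  unfolding hbar_eq_Inf_info_tail[OF pos_marginal] by (rule cInf_lower[OF _ bdd_below_admissible]) simp

lemma hbar_ge:
  assumes "info_tail Q x a > \<epsilon>" shows "a \<le> hbar \<epsilon> Q x"
  unfolding hbar_eq_Inf_info_tail[OF pos_marginal]
proof (rule cInf_greatest[OF admissible_nonempty])
  fix s assume "s \<in> {a. info_tail Q x a \<le> \<epsilon>}"
  then show "a \<le> s" using info_tail_antimono[of s a Q x] assms by (cases "a \<le> s") auto
qed

lemma hbar_nonneg: "hbar \<epsilon> Q x \<ge> 0"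
  unfolding hbar_eq_Inf_info_tail[OF pos_marginal]
  by (rule cInf_greatest[OF admissible_nonempty]) (simp add: admissible_nonneg)

lemma info_tail_le_if_hbar_less:
  assumes "hbar \<epsilon> Q x < a" shows "info_tail Q x a \<le> \<epsilon>"
proof -
  obtain s where "info_tail Q x s \<le> \<epsilon>" "s < a"
    using assms cInf_less_iff[OF admissible_nonempty bdd_below_admissible]
    unfolding hbar_eq_Inf_info_tail[OF pos_marginal] by auto
  then show ?thesis using info_tail_antimono[of s a Q x] by simp
qed

lemma hbar_le_cond_mean:
  "ennreal (hbar \<epsilon> Q x) \<le> (\<integral>\<^sup>+ y. ennreal (cond_info Q x y) \<partial>cond_snd_pmf Q x) / ennreal \<epsilon> + 1"
proof (cases "(\<integral>\<^sup>+ y. ennreal (cond_info Q x y) \<partial>cond_snd_pmf Q x) = \<infinity>")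
  case True
  then show ?thesis using eps by (simp add: ennreal_top_divide)
next
  case False
  define e where "e = enn2real (\<integral>\<^sup>+ y. ennreal (cond_info Q x y) \<partial>cond_snd_pmf Q x)"
  have e0: "e \<ge> 0" by (simp add: e_def)
  have mean: "(\<integral>\<^sup>+ y. ennreal (cond_info Q x y) \<partial>cond_snd_pmf Q x) = ennreal e"
    using False by (simp add: e_def less_top ennreal_enn2real)
  define a where "a = e / \<epsilon> + 1"
  have a0: "a > 0" using e0 eps by (simp add: a_def add_nonneg_pos)
  have "info_tail Q x a \<le> measure (cond_snd_pmf Q x) {y. a \<le> cond_info Q x y}"
    unfolding info_tail_def by (auto intro!: measure_pmf.finite_measure_mono)
  then have "a * info_tail Q x a \<le> e"
    using measure_pmf_Markov_inequality[OF False a0] a0 unfolding e_def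
    by (meson mult_left_mono order_trans less_imp_le)
  then have "info_tail Q x a \<le> e / a" using a0 by (simp add: field_simps)
  also have "e / a \<le> \<epsilon>"
    using a0 eps e0 by (simp add: a_def field_simps)
  finally have "ennreal (hbar \<epsilon> Q x) \<le> ennreal a" by (intro ennreal_leI hbar_le)
  also have "ennreal a = ennreal e / ennreal \<epsilon> + 1"
    using e0 eps by (simp add: a_def divide_ennreal ennreal_plus)
  finally show ?thesis using mean by simp
qed

end

lemma hbar_antimono:
  assumes "pmf (map_pmf fst Q) x > 0" and "0 < \<epsilon>" "\<epsilon> \<le> \<epsilon>'" "\<epsilon>' < 1"
  shows "hbar \<epsilon>' Q x \<le> hbar \<epsilon> Q x"
proof (rule field_le_epsilon)
  interpret small: hbar_quantile Q x \<epsilon> using assms by unfold_locales auto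
  interpret large: hbar_quantile Q x \<epsilon>' using assms by unfold_locales auto
  fix d :: real assume "d > 0"
  then have "info_tail Q x (hbar \<epsilon> Q x + d) \<le> \<epsilon>" by (intro small.info_tail_le_if_hbar_less) simp
  then show "hbar \<epsilon>' Q x \<le> hbar \<epsilon> Q x + d" using assms by (intro large.hbar_le) simp
qed

lemma nn_integral_indicator_hbar_le:
  assumes "0 < \<epsilon>" "\<epsilon> < 1"
  shows "(\<integral>\<^sup>+ x. indicator B x * ennreal (hbar \<epsilon> Q x) \<partial>map_pmf fst Q)
     \<le> (\<integral>\<^sup>+ x. indicator B x * (\<integral>\<^sup>+ y. ennreal (cond_info Q x y) \<partial>cond_snd_pmf Q x) \<partial>map_pmf fst Q)
         / ennreal \<epsilon> + emeasure (map_pmf fst Q) B"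
proof -
  let ?E = "\<lambda>x. \<integral>\<^sup>+ y. ennreal (cond_info Q x y) \<partial>cond_snd_pmf Q x"
  have "(\<integral>\<^sup>+ x. indicator B x * ennreal (hbar \<epsilon> Q x) \<partial>map_pmf fst Q)
     \<le> (\<integral>\<^sup>+ x. (indicator B x * ?E x) / ennreal \<epsilon> + indicator B x \<partial>map_pmf fst Q)"
  proof (intro nn_integral_mono_AE, unfold AE_measure_pmf_iff, intro ballI)
    fix x assume "x \<in> set_pmf (map_pmf fst Q)"
    then interpret hbar_quantile Q x \<epsilon> using assms by unfold_locales (auto simp: pmf_positive)
    have "indicator B x * ennreal (hbar \<epsilon> Q x) \<le> indicator B x * (?E x / ennreal \<epsilon> + 1)"
      by (intro mult_left_mono hbar_le_cond_mean) simp
    also have "\<dots> = (indicator B x * ?E x) / ennreal \<epsilon> + indicator B x"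
      by (simp add: distrib_left ennreal_times_divide)
    finally show "indicator B x * ennreal (hbar \<epsilon> Q x) \<le> (indicator B x * ?E x) / ennreal \<epsilon> + indicator B x" .
  qed
  also have "\<dots> = (\<integral>\<^sup>+ x. indicator B x * ?E x \<partial>map_pmf fst Q) / ennreal \<epsilon> + emeasure (map_pmf fst Q) B"
    by (simp add: nn_integral_add nn_integral_divide del: nn_integral_map_pmf)
  finally show ?thesis .
qed

lemma nn_integral_hbar_le:
  assumes "0 < \<epsilon>" "\<epsilon> < 1"
  shows "(\<integral>\<^sup>+ x. ennreal (hbar \<epsilon> Q x) \<partial>map_pmf fst Q)
     \<le> (\<integral>\<^sup>+ z. ennreal (cond_info Q (fst z) (snd z)) \<partial>Q) / ennreal \<epsilon> + 1"
  using nn_integral_indicator_hbar_le[OF assms, where B=UNIV and Q=Q]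
  by (simp add: nn_integral_cond_snd_pmf measure_pmf.emeasure_space_1 del: nn_integral_map_pmf)

lemma nn_integral_hbar_finite:
  fixes Q :: "('a \<times> 'b) pmf"
  assumes "(\<integral>\<^sup>+ z. ennreal (cond_info Q (fst z) (snd z)) \<partial>Q) \<noteq> \<infinity>" and "0 < \<epsilon>" "\<epsilon> < 1"
  shows "(\<integral>\<^sup>+ x. ennreal (hbar \<epsilon> Q x) \<partial>map_pmf fst Q) \<noteq> \<infinity>"
  using nn_integral_hbar_le[OF assms(2,3), of Q] assms(1,2)
  by (auto simp: ennreal_divide_eq_top_iff top_unique)

lemma nn_integral_measure_cond_likelihood_ratio_gt:
  fixes N :: "'b pmf"
  assumes t: "t > 0"
  shows "(\<integral>\<^sup>+ x. ennreal (measure (cond_snd_pmf R x) {y. pmf N y > t * pmf (map_pmf snd R) y})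
            \<partial>map_pmf fst R) \<le> ennreal (1 / t)"
proof -
  let ?G = "{y. pmf N y > t * pmf (map_pmf snd R) y}"
  have "(\<integral>\<^sup>+ x. ennreal (measure (cond_snd_pmf R x) ?G) \<partial>map_pmf fst R)
      = (\<integral>\<^sup>+ x. (\<integral>\<^sup>+ y. indicator ?G y \<partial>cond_snd_pmf R x) \<partial>map_pmf fst R)"
    by (intro nn_integral_cong) (simp add: measure_pmf.emeasure_eq_measure)
  also have "\<dots> = (\<integral>\<^sup>+ z. indicator ?G (snd z) \<partial>R)"
    by (rule nn_integral_cond_snd_pmf)
  also have "\<dots> = (\<integral>\<^sup>+ y. indicator ?G y \<partial>map_pmf snd R)"
    by simp
  also have "\<dots> = ennreal (measure (map_pmf snd R) ?G)"
    by (simp only: nn_integral_indicator sets_measure_pmf UNIV_I measure_pmf.emeasure_eq_measure)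
  also have "\<dots> \<le> ennreal (1 / t)"
    using measure_pmf_likelihood_ratio_gt[OF t] by (intro ennreal_leI)
  finally show ?thesis .
qed

lemma nn_integral_cond_likelihood_ratio_le:
  fixes N :: "'b pmf"
  shows "(\<integral>\<^sup>+ x. (\<integral>\<^sup>+ y. ennreal (pmf N y / pmf (map_pmf snd R) y / ln 2) \<partial>cond_snd_pmf R x)
            \<partial>map_pmf fst R) \<le> ennreal (1 / ln 2)"
proof -
  have "(\<integral>\<^sup>+ x. (\<integral>\<^sup>+ y. ennreal (pmf N y / pmf (map_pmf snd R) y / ln 2) \<partial>cond_snd_pmf R x) \<partial>map_pmf fst R)
      = (\<integral>\<^sup>+ z. ennreal (pmf N (snd z) / pmf (map_pmf snd R) (snd z) / ln 2) \<partial>R)"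
    by (rule nn_integral_cond_snd_pmf)
  also have "\<dots> = (\<integral>\<^sup>+ y. ennreal (pmf (map_pmf snd R) y) * ennreal (pmf N y / pmf (map_pmf snd R) y / ln 2)
           \<partial>count_space UNIV)"
    by (simp add: nn_integral_measure_pmf[symmetric])
  also have "\<dots> \<le> (\<integral>\<^sup>+ y. ennreal (1 / ln 2) * ennreal (pmf N y) \<partial>count_space UNIV)"
  proof (intro nn_integral_mono)
    fix y
    show "ennreal (pmf (map_pmf snd R) y) * ennreal (pmf N y / pmf (map_pmf snd R) y / ln 2)
        \<le> ennreal (1 / ln 2) * ennreal (pmf N y)"
      by (cases "pmf (map_pmf snd R) y = 0") (simp_all flip: ennreal_mult)
  qed
  also have "\<dots> = ennreal (1 / ln 2)"
    by (simp add: nn_integral_cmult nn_integral_pmf)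
  finally show ?thesis .
qed

section \<open>Mixtures with a common first marginal\<close>

locale mixture_equal_marginals =
  fixes R1 R2 R :: "('a \<times> 'b) pmf" and \<alpha>1 \<alpha>2 :: real
  assumes same_fst: "map_pmf fst R1 = map_pmf fst R2"
    and pos1: "\<alpha>1 > 0" and pos2: "\<alpha>2 > 0" and sum_one: "\<alpha>1 + \<alpha>2 = 1"
    and mixture: "\<And>z. pmf R z = \<alpha>1 * pmf R1 z + \<alpha>2 * pmf R2 z"
begin

lemma swap: "mixture_equal_marginals R2 R1 R \<alpha>2 \<alpha>1"
  using same_fst pos1 pos2 sum_one mixture by unfold_locales (auto simp: add.commute)

lemma fst_mixture: "map_pmf fst R = map_pmf fst R1"
  by (rule pmf_eqI)
    (simp add: pmf_map_pmf_mixture[OF mixture] pos1 pos2 less_imp_le same_fst flip: distrib_right sum_one)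

lemma pmf_snd_mixture:
  "pmf (map_pmf snd R) y = \<alpha>1 * pmf (map_pmf snd R1) y + \<alpha>2 * pmf (map_pmf snd R2) y"
  using pmf_map_pmf_mixture[OF mixture] pos1 pos2 by simp

lemma measure_cond_snd_mixture:
  assumes "pmf (map_pmf fst R1) x > 0"
  shows "measure (cond_snd_pmf R x) A
    = \<alpha>1 * measure (cond_snd_pmf R1 x) A + \<alpha>2 * measure (cond_snd_pmf R2 x) A"
  using assms pos1 pos2
  by (intro measure_pmf_mixture)
    (auto simp: pmf_cond_snd_pmf fst_mixture mixture simp flip: same_fst add_divide_distrib)

lemma nn_integral_cond_snd_mixture:
  assumes "pmf (map_pmf fst R1) x > 0"
  shows "(\<integral>\<^sup>+ y. f y \<partial>cond_snd_pmf R x)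
    = ennreal \<alpha>1 * (\<integral>\<^sup>+ y. f y \<partial>cond_snd_pmf R1 x) + ennreal \<alpha>2 * (\<integral>\<^sup>+ y. f y \<partial>cond_snd_pmf R2 x)"
  using assms pos1 pos2
  by (intro nn_integral_pmf_mixture)
    (auto simp: pmf_cond_snd_pmf fst_mixture mixture simp flip: same_fst add_divide_distrib)

lemma log_min_weight_le: "log 2 (min \<alpha>1 \<alpha>2) \<le> log 2 \<alpha>1" "log 2 (min \<alpha>1 \<alpha>2) \<le> log 2 \<alpha>2"
  using pos1 pos2 by (auto intro!: log_mono simp: min_def)

lemma log_weight_nonpos: "log 2 \<alpha>1 \<le> 0"
  using pos1 pos2 sum_one by simp

lemma log_min_weight_nonpos: "log 2 (min \<alpha>1 \<alpha>2) \<le> 0"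
  using pos1 pos2 sum_one by (simp add: min_def)

lemma pmf_mixture_pos:
  assumes "pmf R1 (x, y) > 0"
  shows "pmf R (x, y) > 0" "pmf (map_pmf snd R1) y > 0" "pmf (map_pmf snd R) y > 0"
proof -
  show R: "pmf R (x, y) > 0" using assms pos1 pos2 by (simp add: mixture add_pos_nonneg)
  show "pmf (map_pmf snd R1) y > 0" using pmf_le_pmf_map_snd[of R1 x y] assms by linarith
  show "pmf (map_pmf snd R) y > 0" using pmf_le_pmf_map_snd[of R x y] R by linarith
qed

lemma cond_info_mixture_ge:
  assumes pos: "pmf R1 (x, y) > 0" and t: "t \<ge> 1" and ratio: "pmf R2 (x, y) \<le> t * pmf R1 (x, y)"
  shows "cond_info R1 x y + log 2 \<alpha>1 - log 2 t \<le> cond_info R x y"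
proof -
  have "\<alpha>1 * (t - 1) \<ge> 0" using pos1 t by simp
  moreover have "t = \<alpha>1 * t + \<alpha>2 * t" using sum_one by (metis distrib_right mult_1)
  ultimately have "\<alpha>1 + \<alpha>2 * t \<le> t" by (simp add: right_diff_distrib)
  have "pmf R (x, y) \<le> (\<alpha>1 + \<alpha>2 * t) * pmf R1 (x, y)"
    using ratio pos2 by (simp add: mixture distrib_right)
  also have "\<dots> \<le> t * pmf R1 (x, y)"
    using \<open>\<alpha>1 + \<alpha>2 * t \<le> t\<close> pos by (intro mult_right_mono) auto
  finally have "pmf R (x, y) \<le> t * pmf R1 (x, y)" .
  moreover have "\<alpha>1 * pmf (map_pmf snd R1) y \<le> pmf (map_pmf snd R) y"
    using pos2 by (simp add: pmf_snd_mixture)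
  ultimately have "log 2 (\<alpha>1 * pmf (map_pmf snd R1) y) - log 2 (t * pmf R1 (x, y))
      \<le> log 2 (pmf (map_pmf snd R) y) - log 2 (pmf R (x, y))"
    using pmf_mixture_pos[OF pos] pos pos1 t by (intro diff_mono) (auto intro!: log_mono)
  then show ?thesis
    using pmf_mixture_pos[OF pos] pos pos1 t by (simp add: cond_info_eq log_mult)
qed

lemma cond_info_mixture_le:
  assumes pos: "pmf R1 (x, y) > 0" and t: "t > 0"
    and ratio: "pmf (map_pmf snd R) y \<le> t * pmf (map_pmf snd R1) y"
  shows "cond_info R x y \<le> cond_info R1 x y + log 2 t - log 2 \<alpha>1"
proof -
  have "\<alpha>1 * pmf R1 (x, y) \<le> pmf R (x, y)" using pos2 by (simp add: mixture)
  then have "log 2 (pmf (map_pmf snd R) y) - log 2 (pmf R (x, y))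
      \<le> log 2 (t * pmf (map_pmf snd R1) y) - log 2 (\<alpha>1 * pmf R1 (x, y))"
    using ratio pmf_mixture_pos[OF pos] pos pos1 by (intro diff_mono) (auto intro!: log_mono)
  then show ?thesis
    using pmf_mixture_pos[OF pos] pos pos1 t by (simp add: cond_info_eq log_mult)
qed

lemma cond_info_mixture_le_ratio:
  assumes pos: "pmf R1 (x, y) > 0"
  shows "cond_info R x y
    \<le> cond_info R1 x y - log 2 \<alpha>1 + pmf (map_pmf snd R) y / pmf (map_pmf snd R1) y / ln 2"
proof -
  note pos' = pmf_mixture_pos[OF pos]
  have "\<alpha>1 * pmf R1 (x, y) \<le> pmf R (x, y)" using pos2 by (simp add: mixture)
  then have "cond_info R x y \<le> log 2 (pmf (map_pmf snd R) y) - log 2 (\<alpha>1 * pmf R1 (x, y))"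
    using pos' pos pos1 by (simp add: cond_info_eq)
  also have "\<dots> = cond_info R1 x y - log 2 \<alpha>1 + log 2 (pmf (map_pmf snd R) y / pmf (map_pmf snd R1) y)"
    using pos' pos pos1 by (simp add: cond_info_eq log_mult log_divide)
  also have "\<dots> \<le> cond_info R1 x y - log 2 \<alpha>1 + pmf (map_pmf snd R) y / pmf (map_pmf snd R1) y / ln 2"
    using pos' by (intro add_left_mono log2_le_divide_ln2) simp
  finally show ?thesis .
qed

lemma hbar_component_le_hbar_mixture:
  assumes px: "pmf (map_pmf fst R1) x > 0" and t: "t \<ge> 1"
    and e: "0 < \<epsilon>" "\<epsilon> < 1" and e': "0 < \<epsilon>'" "\<epsilon>' < 1"
    and ee: "\<alpha>1 * (\<epsilon>' - 1 / t) \<ge> \<epsilon>"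
  shows "hbar \<epsilon>' R1 x - log 2 t + log 2 \<alpha>1 - 1 \<le> hbar \<epsilon> R x"
proof -
  interpret component: hbar_quantile R1 x \<epsilon>' using px e' by unfold_locales
  interpret mix: hbar_quantile R x \<epsilon> using px e by unfold_locales (auto simp: fst_mixture)
  define a where "a = hbar \<epsilon>' R1 x - log 2 t + log 2 \<alpha>1 - 1"
  define b where "b = hbar \<epsilon>' R1 x - 1"
  have tail_b: "info_tail R1 x b > \<epsilon>'"
  proof (rule ccontr)
    assume "\<not> info_tail R1 x b > \<epsilon>'"
    then have "hbar \<epsilon>' R1 x \<le> b" by (intro component.hbar_le) simp
    then show False by (simp add: b_def)
  qed
  define G where "G = {y. pmf (cond_snd_pmf R2 x) y > t * pmf (cond_snd_pmf R1 x) y}"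
  have G: "measure (cond_snd_pmf R1 x) G \<le> 1 / t"
    unfolding G_def using t by (intro measure_pmf_likelihood_ratio_gt) simp
  have "{y. cond_info R1 x y > b} \<inter> set_pmf (cond_snd_pmf R1 x) \<subseteq> {y. cond_info R x y > a} \<union> G"
  proof
    fix y assume y: "y \<in> {y. cond_info R1 x y > b} \<inter> set_pmf (cond_snd_pmf R1 x)"
    show "y \<in> {y. cond_info R x y > a} \<union> G"
    proof (cases "y \<in> G")
      case False
      have pos: "pmf R1 (x, y) > 0" using pmf_pos_if_in_cond_snd_pmf[OF px] y by auto
      have "pmf R2 (x, y) \<le> t * pmf R1 (x, y)"
        using False px same_fst by (auto simp: G_def pmf_cond_snd_pmf divide_le_eq field_simps)
      with cond_info_mixture_ge[OF pos t] y show ?thesis by (auto simp: a_def b_def)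
    qed simp
  qed
  then have "info_tail R1 x b \<le> measure (cond_snd_pmf R1 x) ({y. cond_info R x y > a} \<union> G)"
    unfolding info_tail_def
    by (subst measure_Int_set_pmf[symmetric]) (rule measure_pmf.finite_measure_mono; simp)
  also have "\<dots> \<le> measure (cond_snd_pmf R1 x) {y. cond_info R x y > a} + measure (cond_snd_pmf R1 x) G"
    by (rule measure_subadditive) auto
  also have "\<dots> \<le> measure (cond_snd_pmf R1 x) {y. cond_info R x y > a} + 1 / t"
    using G by simp
  finally have "\<alpha>1 * (\<epsilon>' - 1/t) < \<alpha>1 * measure (cond_snd_pmf R1 x) {y. cond_info R x y > a}"
    using tail_b pos1 by (intro mult_strict_left_mono) auto
  also have "\<dots> \<le> info_tail R x a"
    unfolding info_tail_def measure_cond_snd_mixture[OF px] using pos2 by simp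
  finally have "a \<le> hbar \<epsilon> R x" using ee by (intro mix.hbar_ge) simp
  then show ?thesis by (simp add: a_def)
qed

lemma measure_cond_info_mixture_gt_le:
  assumes px: "pmf (map_pmf fst R1) x > 0" and t: "t > 0"
  shows "measure (cond_snd_pmf R1 x) {y. cond_info R x y > b + log 2 t - log 2 \<alpha>1}
     \<le> info_tail R1 x b
        + measure (cond_snd_pmf R1 x) {y. pmf (map_pmf snd R) y > t * pmf (map_pmf snd R1) y}"
proof -
  define G where "G = {y. pmf (map_pmf snd R) y > t * pmf (map_pmf snd R1) y}"
  have "{y. cond_info R x y > b + log 2 t - log 2 \<alpha>1} \<inter> set_pmf (cond_snd_pmf R1 x)
      \<subseteq> {y. cond_info R1 x y > b} \<union> G"
  proof
    fix y assume y: "y \<in> {y. cond_info R x y > b + log 2 t - log 2 \<alpha>1} \<inter> set_pmf (cond_snd_pmf R1 x)"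
    show "y \<in> {y. cond_info R1 x y > b} \<union> G"
    proof (cases "y \<in> G")
      case False
      have pos: "pmf R1 (x, y) > 0" using pmf_pos_if_in_cond_snd_pmf[OF px] y by auto
      from False cond_info_mixture_le[OF pos t] y show ?thesis by (auto simp: G_def)
    qed simp
  qed
  then have "measure (cond_snd_pmf R1 x) {y. cond_info R x y > b + log 2 t - log 2 \<alpha>1}
      \<le> measure (cond_snd_pmf R1 x) ({y. cond_info R1 x y > b} \<union> G)"
    by (subst measure_Int_set_pmf[symmetric]) (rule measure_pmf.finite_measure_mono; simp)
  also have "\<dots> \<le> measure (cond_snd_pmf R1 x) {y. cond_info R1 x y > b} + measure (cond_snd_pmf R1 x) G"
    by (rule measure_subadditive) auto
  finally show ?thesis by (simp add: info_tail_def G_def)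
qed

text \<open>Off the events measured here, the information densities of the mixture and of the
  component producing y differ by at most log t - log alpha_i.\<close>

definition marginal_ratio_excess :: "real \<Rightarrow> 'a \<Rightarrow> real" where
  "marginal_ratio_excess t x =
      \<alpha>1 * measure (cond_snd_pmf R1 x) {y. pmf (map_pmf snd R) y > t * pmf (map_pmf snd R1) y}
    + \<alpha>2 * measure (cond_snd_pmf R2 x) {y. pmf (map_pmf snd R) y > t * pmf (map_pmf snd R2) y}"

lemma hbar_mixture_le_max:
  assumes px: "pmf (map_pmf fst R1) x > 0" and t: "t \<ge> 1" and e: "0 < \<epsilon>" "\<epsilon> < 1"
    and excess: "marginal_ratio_excess t x \<le> \<epsilon> / 2"
  shows "hbar \<epsilon> R x \<le> max (hbar (\<epsilon>/2) R1 x) (hbar (\<epsilon>/2) R2 x) + log 2 t - log 2 (min \<alpha>1 \<alpha>2) + 1"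
proof -
  interpret swapped: mixture_equal_marginals R2 R1 R \<alpha>2 \<alpha>1 by (rule swap)
  have px2: "pmf (map_pmf fst R2) x > 0" using px by (simp add: same_fst)
  interpret component1: hbar_quantile R1 x "\<epsilon>/2" using px e by unfold_locales auto
  interpret component2: hbar_quantile R2 x "\<epsilon>/2" using px2 e by unfold_locales auto
  interpret mix: hbar_quantile R x \<epsilon> using px e by unfold_locales (auto simp: fst_mixture)
  define a where "a = max (hbar (\<epsilon>/2) R1 x) (hbar (\<epsilon>/2) R2 x) + log 2 t - log 2 (min \<alpha>1 \<alpha>2) + 1"
  have "info_tail R1 x (a - log 2 t + log 2 \<alpha>1) \<le> \<epsilon>/2"
    by (rule component1.info_tail_le_if_hbar_less) (use log_min_weight_le in \<open>simp add: a_def\<close>)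
  then have m1: "measure (cond_snd_pmf R1 x) {y. cond_info R x y > a}
      \<le> \<epsilon>/2 + measure (cond_snd_pmf R1 x) {y. pmf (map_pmf snd R) y > t * pmf (map_pmf snd R1) y}"
    using measure_cond_info_mixture_gt_le[OF px, of t "a - log 2 t + log 2 \<alpha>1"] t by simp
  have "info_tail R2 x (a - log 2 t + log 2 \<alpha>2) \<le> \<epsilon>/2"
    by (rule component2.info_tail_le_if_hbar_less) (use log_min_weight_le in \<open>simp add: a_def\<close>)
  then have m2: "measure (cond_snd_pmf R2 x) {y. cond_info R x y > a}
      \<le> \<epsilon>/2 + measure (cond_snd_pmf R2 x) {y. pmf (map_pmf snd R) y > t * pmf (map_pmf snd R2) y}"
    using swapped.measure_cond_info_mixture_gt_le[OF px2, of t "a - log 2 t + log 2 \<alpha>2"] t by simp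
  have "info_tail R x a
      = \<alpha>1 * measure (cond_snd_pmf R1 x) {y. cond_info R x y > a}
        + \<alpha>2 * measure (cond_snd_pmf R2 x) {y. cond_info R x y > a}"
    unfolding info_tail_def by (rule measure_cond_snd_mixture[OF px])
  also have "\<dots> \<le> \<alpha>1 * (\<epsilon>/2 + measure (cond_snd_pmf R1 x) {y. pmf (map_pmf snd R) y > t * pmf (map_pmf snd R1) y})
      + \<alpha>2 * (\<epsilon>/2 + measure (cond_snd_pmf R2 x) {y. pmf (map_pmf snd R) y > t * pmf (map_pmf snd R2) y})"
    using m1 m2 pos1 pos2 by (intro add_mono mult_left_mono) auto
  also have "\<dots> = (\<alpha>1 + \<alpha>2) * (\<epsilon>/2) + marginal_ratio_excess t x"
    unfolding marginal_ratio_excess_def by (simp add: algebra_simps)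
  also have "\<dots> \<le> \<epsilon>" using excess sum_one by simp
  finally have "hbar \<epsilon> R x \<le> a" by (rule mix.hbar_le)
  then show ?thesis by (simp add: a_def)
qed

lemma cond_mean_info_mixture_le:
  assumes px: "pmf (map_pmf fst R1) x > 0"
  shows "(\<integral>\<^sup>+ y. ennreal (cond_info R x y) \<partial>cond_snd_pmf R1 x)
     \<le> (\<integral>\<^sup>+ y. ennreal (cond_info R1 x y) \<partial>cond_snd_pmf R1 x) + ennreal (- log 2 \<alpha>1)
        + (\<integral>\<^sup>+ y. ennreal (pmf (map_pmf snd R) y / pmf (map_pmf snd R1) y / ln 2) \<partial>cond_snd_pmf R1 x)"
proof -
  have "(\<integral>\<^sup>+ y. ennreal (cond_info R x y) \<partial>cond_snd_pmf R1 x)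
     \<le> (\<integral>\<^sup>+ y. ennreal (cond_info R1 x y) + ennreal (- log 2 \<alpha>1)
        + ennreal (pmf (map_pmf snd R) y / pmf (map_pmf snd R1) y / ln 2) \<partial>cond_snd_pmf R1 x)"
  proof (intro nn_integral_mono_AE, unfold AE_measure_pmf_iff, intro ballI)
    fix y assume "y \<in> set_pmf (cond_snd_pmf R1 x)"
    then have pos: "pmf R1 (x, y) > 0" using pmf_pos_if_in_cond_snd_pmf[OF px] by auto
    have "ennreal (cond_info R x y)
        \<le> ennreal (cond_info R1 x y + - log 2 \<alpha>1 + pmf (map_pmf snd R) y / pmf (map_pmf snd R1) y / ln 2)"
      using cond_info_mixture_le_ratio[OF pos] by (intro ennreal_leI) simp
    also have "\<dots> = ennreal (cond_info R1 x y) + ennreal (- log 2 \<alpha>1)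
        + ennreal (pmf (map_pmf snd R) y / pmf (map_pmf snd R1) y / ln 2)"
    proof -
      have "0 \<le> cond_info R1 x y" "0 \<le> - log 2 \<alpha>1"
        "0 \<le> pmf (map_pmf snd R) y / pmf (map_pmf snd R1) y / ln 2"
        using cond_info_nonneg[OF pos] log_weight_nonpos by auto
      then show ?thesis by (simp only: ennreal_plus add_nonneg_nonneg)
    qed
    finally show "ennreal (cond_info R x y) \<le> ennreal (cond_info R1 x y) + ennreal (- log 2 \<alpha>1)
        + ennreal (pmf (map_pmf snd R) y / pmf (map_pmf snd R1) y / ln 2)" .
  qed
  also have "\<dots> = (\<integral>\<^sup>+ y. ennreal (cond_info R1 x y) \<partial>cond_snd_pmf R1 x) + ennreal (- log 2 \<alpha>1)
        + (\<integral>\<^sup>+ y. ennreal (pmf (map_pmf snd R) y / pmf (map_pmf snd R1) y / ln 2) \<partial>cond_snd_pmf R1 x)"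
    by (simp add: nn_integral_add measure_pmf.emeasure_space_1)
  finally show ?thesis .
qed

lemma nn_integral_indicator_cond_mean_info_le:
  "(\<integral>\<^sup>+ x. indicator B x * (\<integral>\<^sup>+ y. ennreal (cond_info R x y) \<partial>cond_snd_pmf R1 x) \<partial>map_pmf fst R1)
   \<le> (\<integral>\<^sup>+ z. indicator B (fst z) * ennreal (cond_info R1 (fst z) (snd z)) \<partial>R1)
      + ennreal (- log 2 \<alpha>1) * emeasure (map_pmf fst R1) B + ennreal (1 / ln 2)"
proof -
  let ?W = "\<lambda>x. (\<integral>\<^sup>+ y. ennreal (pmf (map_pmf snd R) y / pmf (map_pmf snd R1) y / ln 2) \<partial>cond_snd_pmf R1 x)"
  let ?E = "\<lambda>x. (\<integral>\<^sup>+ y. ennreal (cond_info R1 x y) \<partial>cond_snd_pmf R1 x)"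
  have "(\<integral>\<^sup>+ x. indicator B x * (\<integral>\<^sup>+ y. ennreal (cond_info R x y) \<partial>cond_snd_pmf R1 x) \<partial>map_pmf fst R1)
     \<le> (\<integral>\<^sup>+ x. indicator B x * ?E x + ennreal (- log 2 \<alpha>1) * indicator B x + ?W x \<partial>map_pmf fst R1)"
  proof (intro nn_integral_mono_AE, unfold AE_measure_pmf_iff, intro ballI)
    fix x assume "x \<in> set_pmf (map_pmf fst R1)"
    then have px: "pmf (map_pmf fst R1) x > 0" by (simp add: pmf_positive)
    have "indicator B x * (\<integral>\<^sup>+ y. ennreal (cond_info R x y) \<partial>cond_snd_pmf R1 x)
       \<le> indicator B x * (?E x + ennreal (- log 2 \<alpha>1) + ?W x)"
      by (intro mult_left_mono cond_mean_info_mixture_le[OF px]) simp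
    also have "\<dots> \<le> indicator B x * ?E x + ennreal (- log 2 \<alpha>1) * indicator B x + ?W x"
      by (cases "x \<in> B") (simp_all add: mult.commute)
    finally show "indicator B x * (\<integral>\<^sup>+ y. ennreal (cond_info R x y) \<partial>cond_snd_pmf R1 x)
       \<le> indicator B x * ?E x + ennreal (- log 2 \<alpha>1) * indicator B x + ?W x" .
  qed
  also have "\<dots> = (\<integral>\<^sup>+ x. indicator B x * ?E x \<partial>map_pmf fst R1)
       + ennreal (- log 2 \<alpha>1) * emeasure (map_pmf fst R1) B + (\<integral>\<^sup>+ x. ?W x \<partial>map_pmf fst R1)"
    by (simp add: nn_integral_add nn_integral_cmult nn_integral_cmult_indicator del: nn_integral_map_pmf)
  also have "(\<integral>\<^sup>+ x. indicator B x * ?E x \<partial>map_pmf fst R1)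
      = (\<integral>\<^sup>+ x. (\<integral>\<^sup>+ y. indicator B x * ennreal (cond_info R1 x y) \<partial>cond_snd_pmf R1 x) \<partial>map_pmf fst R1)"
    by (intro nn_integral_cong) (simp add: nn_integral_cmult)
  also have "\<dots> = (\<integral>\<^sup>+ z. indicator B (fst z) * ennreal (cond_info R1 (fst z) (snd z)) \<partial>R1)"
    by (rule nn_integral_cond_snd_pmf)
  finally show ?thesis
    using nn_integral_cond_likelihood_ratio_le[where N="map_pmf snd R" and R=R1] by (meson add_left_mono order_trans)
qed

lemma nn_integral_indicator_cond_mean_info_mixture_le:
  "(\<integral>\<^sup>+ x. indicator B x * (\<integral>\<^sup>+ y. ennreal (cond_info R x y) \<partial>cond_snd_pmf R x) \<partial>map_pmf fst R1)
   \<le> ennreal \<alpha>1 * ((\<integral>\<^sup>+ z. indicator B (fst z) * ennreal (cond_info R1 (fst z) (snd z)) \<partial>R1)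
      + ennreal (- log 2 \<alpha>1) * emeasure (map_pmf fst R1) B + ennreal (1 / ln 2))
   + ennreal \<alpha>2 * ((\<integral>\<^sup>+ z. indicator B (fst z) * ennreal (cond_info R2 (fst z) (snd z)) \<partial>R2)
      + ennreal (- log 2 \<alpha>2) * emeasure (map_pmf fst R1) B + ennreal (1 / ln 2))"
proof -
  interpret swapped: mixture_equal_marginals R2 R1 R \<alpha>2 \<alpha>1 by (rule swap)
  let ?I = "\<lambda>Q x. indicator B x * (\<integral>\<^sup>+ y. ennreal (cond_info R x y) \<partial>cond_snd_pmf Q x)"
  have "(\<integral>\<^sup>+ x. ?I R x \<partial>map_pmf fst R1)
      = (\<integral>\<^sup>+ x. ennreal \<alpha>1 * ?I R1 x + ennreal \<alpha>2 * ?I R2 x \<partial>map_pmf fst R1)"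
  proof (intro nn_integral_cong_AE, unfold AE_measure_pmf_iff, intro ballI)
    fix x assume "x \<in> set_pmf (map_pmf fst R1)"
    then have px: "pmf (map_pmf fst R1) x > 0" by (simp add: pmf_positive)
    show "?I R x = ennreal \<alpha>1 * ?I R1 x + ennreal \<alpha>2 * ?I R2 x"
      by (simp add: nn_integral_cond_snd_mixture[OF px] distrib_left mult.left_commute)
  qed
  also have "\<dots> = ennreal \<alpha>1 * (\<integral>\<^sup>+ x. ?I R1 x \<partial>map_pmf fst R1) + ennreal \<alpha>2 * (\<integral>\<^sup>+ x. ?I R2 x \<partial>map_pmf fst R2)"
    by (simp add: nn_integral_add nn_integral_cmult same_fst del: nn_integral_map_pmf)
  also have "\<dots> \<le> ennreal \<alpha>1 * ((\<integral>\<^sup>+ z. indicator B (fst z) * ennreal (cond_info R1 (fst z) (snd z)) \<partial>R1)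
      + ennreal (- log 2 \<alpha>1) * emeasure (map_pmf fst R1) B + ennreal (1 / ln 2))
   + ennreal \<alpha>2 * ((\<integral>\<^sup>+ z. indicator B (fst z) * ennreal (cond_info R2 (fst z) (snd z)) \<partial>R2)
      + ennreal (- log 2 \<alpha>2) * emeasure (map_pmf fst R2) B + ennreal (1 / ln 2))"
    by (intro add_mono mult_left_mono nn_integral_indicator_cond_mean_info_le
        swapped.nn_integral_indicator_cond_mean_info_le) auto
  finally show ?thesis by (simp add: same_fst)
qed

lemma measure_marginal_ratio_excess_gt:
  assumes t: "t > 0" and e: "\<epsilon> > 0"
  shows "measure (map_pmf fst R1) {x. marginal_ratio_excess t x > \<epsilon>/2} \<le> 2 / (\<epsilon> * t)"
proof -
  let ?D = "\<lambda>x. ennreal (marginal_ratio_excess t x)"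
  have "(\<integral>\<^sup>+ x. ?D x \<partial>map_pmf fst R1)
    = ennreal \<alpha>1 * (\<integral>\<^sup>+ x. ennreal (measure (cond_snd_pmf R1 x)
          {y. pmf (map_pmf snd R) y > t * pmf (map_pmf snd R1) y}) \<partial>map_pmf fst R1)
    + ennreal \<alpha>2 * (\<integral>\<^sup>+ x. ennreal (measure (cond_snd_pmf R2 x)
          {y. pmf (map_pmf snd R) y > t * pmf (map_pmf snd R2) y}) \<partial>map_pmf fst R2)"
    unfolding marginal_ratio_excess_def using pos1 pos2
    by (simp add: nn_integral_add nn_integral_cmult ennreal_plus ennreal_mult same_fst
        del: nn_integral_map_pmf)
  also have "\<dots> \<le> ennreal \<alpha>1 * ennreal (1/t) + ennreal \<alpha>2 * ennreal (1/t)"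
    by (intro add_mono mult_left_mono nn_integral_measure_cond_likelihood_ratio_gt t) auto
  also have "\<dots> = ennreal (1/t)"
    using pos1 pos2 sum_one by (simp flip: distrib_right ennreal_plus)
  finally have integral: "(\<integral>\<^sup>+ x. ?D x \<partial>map_pmf fst R1) \<le> ennreal (1/t)" .
  then have "(\<epsilon>/2) * measure (map_pmf fst R1) {x. \<epsilon>/2 \<le> marginal_ratio_excess t x}
      \<le> enn2real (\<integral>\<^sup>+ x. ?D x \<partial>map_pmf fst R1)"
    using e by (intro measure_pmf_Markov_inequality) (auto simp: top_unique)
  also have "\<dots> \<le> 1 / t"
    using enn2real_mono[OF integral] t by simp
  finally have "(\<epsilon>/2) * measure (map_pmf fst R1) {x. \<epsilon>/2 \<le> marginal_ratio_excess t x} \<le> 1 / t" .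
  moreover have "measure (map_pmf fst R1) {x. marginal_ratio_excess t x > \<epsilon>/2}
      \<le> measure (map_pmf fst R1) {x. \<epsilon>/2 \<le> marginal_ratio_excess t x}"
    by (intro measure_pmf.finite_measure_mono) auto
  ultimately have "(\<epsilon>/2) * measure (map_pmf fst R1) {x. marginal_ratio_excess t x > \<epsilon>/2} \<le> 1 / t"
    using e by (meson dual_order.trans half_gt_zero less_imp_le mult_left_mono)
  then show ?thesis using e t by (simp add: field_simps)
qed

end

section \<open>Mixtures with bounded information densities\<close>

text \<open>With N = n this is the form in which uniform integrability of the normalised information
  density enters, see unif_integrable_info_bound below.\<close>

locale mixture_info_bounds = mixture_equal_marginals +
  fixes A :: "'a set" and N u \<eta> :: real
  assumes outside: "\<And>x. x \<notin> A \<Longrightarrow> pmf (map_pmf fst R1) x = 0"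
    and bounds_nonneg: "N \<ge> 0" "u \<ge> 0" "\<eta> \<ge> 0"
    and info_bound1: "\<And>B. (\<integral>\<^sup>+ z. indicator B (fst z) * ennreal (cond_info R1 (fst z) (snd z)) \<partial>R1)
                 \<le> ennreal (N * (u * measure (map_pmf fst R1) B + \<eta>))"
    and info_bound2: "\<And>B. (\<integral>\<^sup>+ z. indicator B (fst z) * ennreal (cond_info R2 (fst z) (snd z)) \<partial>R2)
                 \<le> ennreal (N * (u * measure (map_pmf fst R1) B + \<eta>))"
begin

lemma nn_integral_indicator_cond_mean_info_mixture_bound:
  "(\<integral>\<^sup>+ x. indicator B x * (\<integral>\<^sup>+ y. ennreal (cond_info R x y) \<partial>cond_snd_pmf R x) \<partial>map_pmf fst R1)
   \<le> ennreal (N * (u * measure (map_pmf fst R1) B + \<eta>)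
              - log 2 (min \<alpha>1 \<alpha>2) * measure (map_pmf fst R1) B + 1 / ln 2)"
proof -
  define p where "p = measure (map_pmf fst R1) B"
  define V where "V = N * (u * p + \<eta>) - log 2 (min \<alpha>1 \<alpha>2) * p + 1 / ln 2"
  have p: "p \<ge> 0" "emeasure (map_pmf fst R1) B = ennreal p"
    by (simp_all add: p_def measure_pmf.emeasure_eq_measure)
  have component: "ennreal \<alpha> * (I + ennreal (- log 2 \<alpha>) * emeasure (map_pmf fst R1) B + ennreal (1 / ln 2))
      \<le> ennreal \<alpha> * ennreal V"
    if I: "I \<le> ennreal (N * (u * p + \<eta>))" and \<alpha>: "0 < \<alpha>" "log 2 (min \<alpha>1 \<alpha>2) \<le> log 2 \<alpha>" for I \<alpha>
  proof (rule mult_left_mono)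
    have "ennreal (- log 2 \<alpha>) * emeasure (map_pmf fst R1) B \<le> ennreal (- log 2 (min \<alpha>1 \<alpha>2)) * ennreal p"
      unfolding p(2) using \<alpha> by (intro mult_right_mono ennreal_leI) auto
    also have "\<dots> = ennreal (- log 2 (min \<alpha>1 \<alpha>2) * p)"
      using log_min_weight_nonpos p(1) by (intro ennreal_mult[symmetric]) auto
    finally have "ennreal (- log 2 \<alpha>) * emeasure (map_pmf fst R1) B \<le> ennreal (- log 2 (min \<alpha>1 \<alpha>2) * p)" .
    then have "I + ennreal (- log 2 \<alpha>) * emeasure (map_pmf fst R1) B + ennreal (1 / ln 2)
        \<le> ennreal (N * (u * p + \<eta>)) + ennreal (- log 2 (min \<alpha>1 \<alpha>2) * p) + ennreal (1 / ln 2)"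
      using I by (intro add_mono) auto
    also have "\<dots> = ennreal V"
    proof -
      have "0 \<le> - (log 2 (min \<alpha>1 \<alpha>2) * p)" "0 \<le> N * (u * p + \<eta>)"
        using bounds_nonneg p(1) log_min_weight_nonpos by (simp_all add: mult_nonpos_nonneg)
      then show ?thesis by (simp add: V_def flip: ennreal_plus)
    qed
    finally show "I + ennreal (- log 2 \<alpha>) * emeasure (map_pmf fst R1) B + ennreal (1 / ln 2) \<le> ennreal V" .
  qed simp
  have "(\<integral>\<^sup>+ x. indicator B x * (\<integral>\<^sup>+ y. ennreal (cond_info R x y) \<partial>cond_snd_pmf R x) \<partial>map_pmf fst R1)
      \<le> ennreal \<alpha>1 * ennreal V + ennreal \<alpha>2 * ennreal V"
    using pos1 pos2 log_min_weight_le
    by (intro order_trans[OF nn_integral_indicator_cond_mean_info_mixture_le] add_mono component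
        info_bound1[of B, folded p_def] info_bound2[of B, folded p_def]) auto
  also have "\<dots> = ennreal V"
    using pos1 pos2 sum_one by (simp flip: distrib_right ennreal_plus)
  finally show ?thesis unfolding V_def p_def .
qed

lemma nn_integral_cond_info_finite:
  "(\<integral>\<^sup>+ z. ennreal (cond_info R1 (fst z) (snd z)) \<partial>R1) \<noteq> \<infinity>"
  "(\<integral>\<^sup>+ z. ennreal (cond_info R2 (fst z) (snd z)) \<partial>R2) \<noteq> \<infinity>"
  "(\<integral>\<^sup>+ z. ennreal (cond_info R (fst z) (snd z)) \<partial>R) \<noteq> \<infinity>"
proof -
  show "(\<integral>\<^sup>+ z. ennreal (cond_info R1 (fst z) (snd z)) \<partial>R1) \<noteq> \<infinity>"
    using info_bound1[of UNIV] by (auto simp: top_unique)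
  show "(\<integral>\<^sup>+ z. ennreal (cond_info R2 (fst z) (snd z)) \<partial>R2) \<noteq> \<infinity>"
    using info_bound2[of UNIV] by (auto simp: top_unique)
  have "(\<integral>\<^sup>+ z. ennreal (cond_info R (fst z) (snd z)) \<partial>R)
      = (\<integral>\<^sup>+ x. indicator UNIV x * (\<integral>\<^sup>+ y. ennreal (cond_info R x y) \<partial>cond_snd_pmf R x) \<partial>map_pmf fst R1)"
    using nn_integral_cond_snd_pmf[where g="\<lambda>x y. ennreal (cond_info R x y)" and R=R]
    by (simp add: fst_mixture del: nn_integral_map_pmf)
  then show "(\<integral>\<^sup>+ z. ennreal (cond_info R (fst z) (snd z)) \<partial>R) \<noteq> \<infinity>"
    using nn_integral_indicator_cond_mean_info_mixture_bound[of UNIV] by (auto simp: top_unique)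
qed

lemma nn_integral_hbar_finite_mixture:
  assumes "0 < \<epsilon>" "\<epsilon> < 1"
  shows "(\<integral>\<^sup>+ x. ennreal (hbar \<epsilon> R x) \<partial>map_pmf fst R1) \<noteq> \<infinity>"
    "(\<integral>\<^sup>+ x. ennreal (max (hbar \<epsilon> R1 x) (hbar \<epsilon> R2 x)) \<partial>map_pmf fst R1) \<noteq> \<infinity>"
proof -
  note finite = nn_integral_hbar_finite[OF nn_integral_cond_info_finite(1) assms]
    nn_integral_hbar_finite[OF nn_integral_cond_info_finite(2) assms]
  show "(\<integral>\<^sup>+ x. ennreal (hbar \<epsilon> R x) \<partial>map_pmf fst R1) \<noteq> \<infinity>"
    using nn_integral_hbar_finite[OF nn_integral_cond_info_finite(3) assms] by (simp add: fst_mixture)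
  have "(\<integral>\<^sup>+ x. ennreal (max (hbar \<epsilon> R1 x) (hbar \<epsilon> R2 x)) \<partial>map_pmf fst R1)
     \<le> (\<integral>\<^sup>+ x. ennreal (hbar \<epsilon> R1 x) + ennreal (hbar \<epsilon> R2 x) \<partial>map_pmf fst R1)"
    by (intro nn_integral_mono) (auto simp: max_def intro: add_increasing add_increasing2)
  also have "\<dots> < \<infinity>"
    using finite by (simp add: nn_integral_add same_fst less_top del: nn_integral_map_pmf)
  finally show "(\<integral>\<^sup>+ x. ennreal (max (hbar \<epsilon> R1 x) (hbar \<epsilon> R2 x)) \<partial>map_pmf fst R1) \<noteq> \<infinity>"
    by simp
qed

lemma hbar_nonneg_on_support:
  assumes "pmf (map_pmf fst R1) x > 0" "0 < \<epsilon>" "\<epsilon> < 1"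
  shows "hbar \<epsilon> R x \<ge> 0" "hbar \<epsilon> R1 x \<ge> 0" "hbar \<epsilon> R2 x \<ge> 0"
proof -
  interpret mix: hbar_quantile R x \<epsilon> using assms by unfold_locales (auto simp: fst_mixture)
  interpret component1: hbar_quantile R1 x \<epsilon> using assms by unfold_locales auto
  interpret component2: hbar_quantile R2 x \<epsilon> using assms by unfold_locales (auto simp: same_fst)
  show "hbar \<epsilon> R x \<ge> 0" "hbar \<epsilon> R1 x \<ge> 0" "hbar \<epsilon> R2 x \<ge> 0"
    by (rule mix.hbar_nonneg component1.hbar_nonneg component2.hbar_nonneg)+
qed

lemma infsum_hbar_eq:
  assumes "0 < \<epsilon>" "\<epsilon> < 1"
  shows "(\<Sum>\<^sub>\<infinity> x\<in>A. pmf (map_pmf fst R) x * hbar \<epsilon> R x)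
      = enn2real (\<integral>\<^sup>+ x. ennreal (hbar \<epsilon> R x) \<partial>map_pmf fst R1)"
  unfolding fst_mixture
  by (rule infsum_pmf_mult_eq_nn_integral)
    (use hbar_nonneg_on_support[OF _ assms] outside nn_integral_hbar_finite_mixture[OF assms] in auto)

lemma infsum_max_hbar_eq:
  assumes "0 < \<epsilon>" "\<epsilon> < 1"
  shows "(\<Sum>\<^sub>\<infinity> x\<in>A. pmf (map_pmf fst R) x * max (hbar \<epsilon> R1 x) (hbar \<epsilon> R2 x))
     = enn2real (\<integral>\<^sup>+ x. ennreal (max (hbar \<epsilon> R1 x) (hbar \<epsilon> R2 x)) \<partial>map_pmf fst R1)"
  unfolding fst_mixture
  by (rule infsum_pmf_mult_eq_nn_integral)
    (use hbar_nonneg_on_support[OF _ assms] outside nn_integral_hbar_finite_mixture[OF assms]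
      in \<open>auto simp: le_max_iff_disj\<close>)

lemma infsum_hbar_antimono:
  assumes "0 < \<epsilon>" "\<epsilon> \<le> \<epsilon>'" "\<epsilon>' < 1"
  shows "(\<Sum>\<^sub>\<infinity> x\<in>A. pmf (map_pmf fst R) x * hbar \<epsilon>' R x)
      \<le> (\<Sum>\<^sub>\<infinity> x\<in>A. pmf (map_pmf fst R) x * hbar \<epsilon> R x)"
proof -
  have "(\<integral>\<^sup>+ x. ennreal (hbar \<epsilon>' R x) \<partial>map_pmf fst R1) \<le> (\<integral>\<^sup>+ x. ennreal (hbar \<epsilon> R x) \<partial>map_pmf fst R1)"
  proof (intro nn_integral_mono_AE, unfold AE_measure_pmf_iff, intro ballI)
    fix x assume "x \<in> set_pmf (map_pmf fst R1)"
    then have px: "pmf (map_pmf fst R) x > 0" by (simp add: pmf_positive fst_mixture)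
    show "ennreal (hbar \<epsilon>' R x) \<le> ennreal (hbar \<epsilon> R x)"
      by (intro ennreal_leI hbar_antimono[OF px assms])
  qed
  then show ?thesis
    using assms nn_integral_hbar_finite_mixture[of \<epsilon>]
    by (simp add: infsum_hbar_eq enn2real_mono less_top)
qed

lemma infsum_max_hbar_antimono:
  assumes "0 < \<epsilon>" "\<epsilon> \<le> \<epsilon>'" "\<epsilon>' < 1"
  shows "(\<Sum>\<^sub>\<infinity> x\<in>A. pmf (map_pmf fst R) x * max (hbar \<epsilon>' R1 x) (hbar \<epsilon>' R2 x))
      \<le> (\<Sum>\<^sub>\<infinity> x\<in>A. pmf (map_pmf fst R) x * max (hbar \<epsilon> R1 x) (hbar \<epsilon> R2 x))"
proof -
  have "(\<integral>\<^sup>+ x. ennreal (max (hbar \<epsilon>' R1 x) (hbar \<epsilon>' R2 x)) \<partial>map_pmf fst R1)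
     \<le> (\<integral>\<^sup>+ x. ennreal (max (hbar \<epsilon> R1 x) (hbar \<epsilon> R2 x)) \<partial>map_pmf fst R1)"
  proof (intro nn_integral_mono_AE, unfold AE_measure_pmf_iff, intro ballI)
    fix x assume "x \<in> set_pmf (map_pmf fst R1)"
    then have px: "pmf (map_pmf fst R1) x > 0" "pmf (map_pmf fst R2) x > 0"
      by (simp_all add: pmf_positive flip: same_fst)
    show "ennreal (max (hbar \<epsilon>' R1 x) (hbar \<epsilon>' R2 x)) \<le> ennreal (max (hbar \<epsilon> R1 x) (hbar \<epsilon> R2 x))"
      using hbar_antimono[OF px(1) assms] hbar_antimono[OF px(2) assms] by (intro ennreal_leI) auto
  qed
  then show ?thesis
    using assms nn_integral_hbar_finite_mixture[of \<epsilon>]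
    by (simp add: infsum_max_hbar_eq enn2real_mono less_top)
qed

lemma infsum_max_hbar_le_infsum_hbar:
  assumes t: "t \<ge> 1" and e: "0 < \<epsilon>" "\<epsilon> < 1" and e': "0 < \<epsilon>'" "\<epsilon>' < 1"
    and ee1: "\<alpha>1 * (\<epsilon>' - 1 / t) \<ge> \<epsilon>" and ee2: "\<alpha>2 * (\<epsilon>' - 1 / t) \<ge> \<epsilon>"
  shows "(\<Sum>\<^sub>\<infinity> x\<in>A. pmf (map_pmf fst R) x * max (hbar \<epsilon>' R1 x) (hbar \<epsilon>' R2 x))
     \<le> (\<Sum>\<^sub>\<infinity> x\<in>A. pmf (map_pmf fst R) x * hbar \<epsilon> R x) + (log 2 t - log 2 (min \<alpha>1 \<alpha>2) + 1)"
proof -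
  interpret swapped: mixture_equal_marginals R2 R1 R \<alpha>2 \<alpha>1 by (rule swap)
  define c where "c = log 2 t - log 2 (min \<alpha>1 \<alpha>2) + 1"
  have "log 2 t \<ge> 0" using t by simp
  then have c0: "c \<ge> 0" using log_min_weight_nonpos by (simp add: c_def)
  have "(\<integral>\<^sup>+ x. ennreal (max (hbar \<epsilon>' R1 x) (hbar \<epsilon>' R2 x)) \<partial>map_pmf fst R1)
      \<le> (\<integral>\<^sup>+ x. ennreal (hbar \<epsilon> R x) + ennreal c \<partial>map_pmf fst R1)"
  proof (intro nn_integral_mono_AE, unfold AE_measure_pmf_iff, intro ballI)
    fix x assume "x \<in> set_pmf (map_pmf fst R1)"
    then have px: "pmf (map_pmf fst R1) x > 0" "pmf (map_pmf fst R2) x > 0"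
      by (simp_all add: pmf_positive flip: same_fst)
    have "hbar \<epsilon>' R1 x \<le> hbar \<epsilon> R x + c" "hbar \<epsilon>' R2 x \<le> hbar \<epsilon> R x + c"
      using hbar_component_le_hbar_mixture[OF px(1) t e e' ee1]
        swapped.hbar_component_le_hbar_mixture[OF px(2) t e e' ee2] log_min_weight_le
      by (simp_all add: c_def)
    then show "ennreal (max (hbar \<epsilon>' R1 x) (hbar \<epsilon>' R2 x)) \<le> ennreal (hbar \<epsilon> R x) + ennreal c"
      using hbar_nonneg_on_support[OF px(1) e] c0 by (simp add: ennreal_leI flip: ennreal_plus)
  qed
  also have "\<dots> = (\<integral>\<^sup>+ x. ennreal (hbar \<epsilon> R x) \<partial>map_pmf fst R1) + ennreal c"
    by (simp add: nn_integral_add measure_pmf.emeasure_space_1 del: nn_integral_map_pmf)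
  finally have "enn2real (\<integral>\<^sup>+ x. ennreal (max (hbar \<epsilon>' R1 x) (hbar \<epsilon>' R2 x)) \<partial>map_pmf fst R1)
     \<le> enn2real ((\<integral>\<^sup>+ x. ennreal (hbar \<epsilon> R x) \<partial>map_pmf fst R1) + ennreal c)"
    using nn_integral_hbar_finite_mixture[OF e] by (intro enn2real_mono) (auto simp: less_top)
  also have "\<dots> = enn2real (\<integral>\<^sup>+ x. ennreal (hbar \<epsilon> R x) \<partial>map_pmf fst R1) + c"
    using nn_integral_hbar_finite_mixture[OF e] c0 by (simp add: enn2real_plus less_top)
  finally show ?thesis unfolding infsum_hbar_eq[OF e] infsum_max_hbar_eq[OF e'] c_def .
qed

lemma info_bound_nonneg:
  assumes "p \<ge> 0" shows "N * (u * p + \<eta>) - log 2 (min \<alpha>1 \<alpha>2) * p + 1 / ln 2 \<ge> 0"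
proof -
  have "0 \<le> N * (u * p + \<eta>)" "0 \<le> - (log 2 (min \<alpha>1 \<alpha>2) * p)" "0 < 1 / ln (2::real)"
    using bounds_nonneg assms log_min_weight_nonpos by (simp_all add: mult_nonpos_nonneg)
  then show ?thesis by linarith
qed

lemma nn_integral_hbar_le_max_hbar:
  assumes t: "t \<ge> 1" and e: "0 < \<epsilon>" "\<epsilon> < 1"
  shows "(\<integral>\<^sup>+ x. ennreal (hbar \<epsilon> R x) \<partial>map_pmf fst R1)
     \<le> (\<integral>\<^sup>+ x. ennreal (max (hbar (\<epsilon>/2) R1 x) (hbar (\<epsilon>/2) R2 x)) \<partial>map_pmf fst R1)
        + ennreal (log 2 t - log 2 (min \<alpha>1 \<alpha>2) + 1)
        + (\<integral>\<^sup>+ x. indicator {x. marginal_ratio_excess t x > \<epsilon>/2} x * ennreal (hbar \<epsilon> R x) \<partial>map_pmf fst R1)"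
proof -
  define c where "c = log 2 t - log 2 (min \<alpha>1 \<alpha>2) + 1"
  have "log 2 t \<ge> 0" using t by simp
  then have c0: "c \<ge> 0" using log_min_weight_nonpos by (simp add: c_def)
  let ?B = "{x. marginal_ratio_excess t x > \<epsilon>/2}"
  let ?M = "\<lambda>x. ennreal (max (hbar (\<epsilon>/2) R1 x) (hbar (\<epsilon>/2) R2 x))"
  have "(\<integral>\<^sup>+ x. ennreal (hbar \<epsilon> R x) \<partial>map_pmf fst R1)
      \<le> (\<integral>\<^sup>+ x. ?M x + ennreal c + indicator ?B x * ennreal (hbar \<epsilon> R x) \<partial>map_pmf fst R1)"
  proof (intro nn_integral_mono_AE, unfold AE_measure_pmf_iff, intro ballI)
    fix x assume "x \<in> set_pmf (map_pmf fst R1)"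
    then have px: "pmf (map_pmf fst R1) x > 0" by (simp add: pmf_positive)
    show "ennreal (hbar \<epsilon> R x) \<le> ?M x + ennreal c + indicator ?B x * ennreal (hbar \<epsilon> R x)"
    proof (cases "x \<in> ?B")
      case False
      then have "hbar \<epsilon> R x \<le> max (hbar (\<epsilon>/2) R1 x) (hbar (\<epsilon>/2) R2 x) + c"
        using hbar_mixture_le_max[OF px t e] by (simp add: c_def)
      then have "ennreal (hbar \<epsilon> R x) \<le> ?M x + ennreal c"
        using hbar_nonneg_on_support[OF px, of "\<epsilon>/2"] e c0
        by (simp add: ennreal_leI le_max_iff_disj flip: ennreal_plus)
      then show ?thesis using False by simp
    qed (simp add: add_increasing)
  qed
  also have "\<dots> = (\<integral>\<^sup>+ x. ?M x \<partial>map_pmf fst R1) + ennreal c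
       + (\<integral>\<^sup>+ x. indicator ?B x * ennreal (hbar \<epsilon> R x) \<partial>map_pmf fst R1)"
    by (simp add: nn_integral_add measure_pmf.emeasure_space_1 del: nn_integral_map_pmf)
  finally show ?thesis unfolding c_def .
qed

lemma nn_integral_indicator_hbar_mixture_le:
  assumes e: "0 < \<epsilon>" "\<epsilon> < 1"
  shows "(\<integral>\<^sup>+ x. indicator B x * ennreal (hbar \<epsilon> R x) \<partial>map_pmf fst R1)
     \<le> ennreal ((N * (u * measure (map_pmf fst R1) B + \<eta>)
                 - log 2 (min \<alpha>1 \<alpha>2) * measure (map_pmf fst R1) B + 1 / ln 2) / \<epsilon>
               + measure (map_pmf fst R1) B)"
proof -
  define p where "p = measure (map_pmf fst R1) B"
  define V where "V = N * (u * p + \<eta>) - log 2 (min \<alpha>1 \<alpha>2) * p + 1 / ln 2"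
  have p: "p \<ge> 0" "emeasure (map_pmf fst R1) B = ennreal p"
    by (simp_all add: p_def measure_pmf.emeasure_eq_measure)
  have "V \<ge> 0" using info_bound_nonneg[OF p(1)] by (simp add: V_def)
  have "(\<integral>\<^sup>+ x. indicator B x * ennreal (hbar \<epsilon> R x) \<partial>map_pmf fst R1)
     \<le> (\<integral>\<^sup>+ x. indicator B x * (\<integral>\<^sup>+ y. ennreal (cond_info R x y) \<partial>cond_snd_pmf R x) \<partial>map_pmf fst R1)
         / ennreal \<epsilon> + ennreal p"
    using nn_integral_indicator_hbar_le[OF e, where B=B and Q=R] unfolding fst_mixture p(2) .
  also have "\<dots> \<le> ennreal V / ennreal \<epsilon> + ennreal p"
    using nn_integral_indicator_cond_mean_info_mixture_bound[of B]
    by (intro add_right_mono divide_right_mono_ennreal) (simp add: V_def p_def)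
  also have "\<dots> = ennreal (V / \<epsilon> + p)"
    using \<open>V \<ge> 0\<close> p e by (simp add: divide_ennreal ennreal_plus)
  finally show ?thesis unfolding V_def p_def .
qed

lemma infsum_hbar_le_infsum_max_hbar:
  assumes t: "t \<ge> 1" and e: "0 < \<epsilon>" "\<epsilon> < 1"
  shows "(\<Sum>\<^sub>\<infinity> x\<in>A. pmf (map_pmf fst R) x * hbar \<epsilon> R x)
     \<le> (\<Sum>\<^sub>\<infinity> x\<in>A. pmf (map_pmf fst R) x * max (hbar (\<epsilon>/2) R1 x) (hbar (\<epsilon>/2) R2 x))
        + (log 2 t - log 2 (min \<alpha>1 \<alpha>2) + 1)
        + ((N * (u * (2 / (\<epsilon> * t)) + \<eta>) - log 2 (min \<alpha>1 \<alpha>2) * (2 / (\<epsilon> * t)) + 1 / ln 2) / \<epsilon>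
           + 2 / (\<epsilon> * t))"
proof -
  define c where "c = log 2 t - log 2 (min \<alpha>1 \<alpha>2) + 1"
  have "log 2 t \<ge> 0" using t by simp
  then have c0: "c \<ge> 0" using log_min_weight_nonpos by (simp add: c_def)
  define p where "p = measure (map_pmf fst R1) {x. marginal_ratio_excess t x > \<epsilon>/2}"
  define W where "W = (N * (u * p + \<eta>) - log 2 (min \<alpha>1 \<alpha>2) * p + 1 / ln 2) / \<epsilon> + p"
  have p: "0 \<le> p" "p \<le> 2 / (\<epsilon> * t)"
    using measure_marginal_ratio_excess_gt[of t \<epsilon>] t e by (simp_all add: p_def)
  have "W \<ge> 0" using info_bound_nonneg[OF p(1)] p e by (simp add: W_def)
  define M where "M = (\<integral>\<^sup>+ x. ennreal (max (hbar (\<epsilon>/2) R1 x) (hbar (\<epsilon>/2) R2 x)) \<partial>map_pmf fst R1)"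
  have M: "M \<noteq> \<infinity>" using nn_integral_hbar_finite_mixture[of "\<epsilon>/2"] e by (simp add: M_def)
  have "(\<integral>\<^sup>+ x. ennreal (hbar \<epsilon> R x) \<partial>map_pmf fst R1) \<le> M + ennreal c + ennreal W"
    using order_trans[OF nn_integral_hbar_le_max_hbar[OF t e]
        add_left_mono[OF nn_integral_indicator_hbar_mixture_le[OF e]]]
    unfolding M_def c_def W_def p_def .
  also have "\<dots> = ennreal (enn2real M + c + W)"
    using M c0 \<open>W \<ge> 0\<close> by (simp add: ennreal_plus ennreal_enn2real less_top)
  finally have "enn2real (\<integral>\<^sup>+ x. ennreal (hbar \<epsilon> R x) \<partial>map_pmf fst R1)
      \<le> enn2real (ennreal (enn2real M + c + W))"
    by (rule enn2real_mono) simp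
  also have "\<dots> = enn2real M + c + W"
    by (rule enn2real_ennreal) (use c0 \<open>W \<ge> 0\<close> in simp)
  also have "W \<le> (N * (u * (2 / (\<epsilon> * t)) + \<eta>) - log 2 (min \<alpha>1 \<alpha>2) * (2 / (\<epsilon> * t)) + 1 / ln 2) / \<epsilon>
      + 2 / (\<epsilon> * t)"
  proof -
    have "u * p \<le> u * (2 / (\<epsilon> * t))" using p bounds_nonneg by (intro mult_left_mono) auto
    then have "N * (u * p + \<eta>) \<le> N * (u * (2 / (\<epsilon> * t)) + \<eta>)"
      using bounds_nonneg by (intro mult_left_mono) auto
    moreover have "- log 2 (min \<alpha>1 \<alpha>2) * p \<le> - log 2 (min \<alpha>1 \<alpha>2) * (2 / (\<epsilon> * t))"
      using p log_min_weight_nonpos by (intro mult_left_mono) auto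
    ultimately show ?thesis
      unfolding W_def using p e by (intro add_mono divide_right_mono) auto
  qed
  finally have bound: "enn2real (\<integral>\<^sup>+ x. ennreal (hbar \<epsilon> R x) \<partial>map_pmf fst R1) \<le> enn2real M + c
      + ((N * (u * (2 / (\<epsilon> * t)) + \<eta>) - log 2 (min \<alpha>1 \<alpha>2) * (2 / (\<epsilon> * t)) + 1 / ln 2) / \<epsilon>
         + 2 / (\<epsilon> * t))"
    by simp
  have e2: "0 < \<epsilon>/2" "\<epsilon>/2 < 1" using e by auto
  show ?thesis
    using bound unfolding infsum_hbar_eq[OF e] infsum_max_hbar_eq[OF e2] M_def c_def .
qed

end

section \<open>Uniform integrability\<close>

lemma Zdist_eq: "Zdist P n = map_pmf (\<lambda>z. cond_info (P n) (fst z) (snd z) / real n) (P n)"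
  unfolding Zdist_def cond_info_def by (intro map_pmf_cong) (auto simp: case_prod_beta)

lemma unif_integrable_tail_le:
  assumes "unif_integrable P" "\<eta> > 0"
  obtains u where "u \<ge> 0"
    "\<And>n. n \<ge> 1 \<Longrightarrow> (\<integral>\<^sup>+ w. ennreal \<bar>w\<bar> * indicator {w. \<bar>w\<bar> \<ge> u} w \<partial>Zdist P n) \<le> ennreal \<eta>"
proof -
  define X where "X u = (SUP n\<in>{1..}. (\<Sum>\<^sub>\<infinity> z\<in>{z. \<bar>z\<bar> \<ge> u}. ennreal (pmf (Zdist P n) z * \<bar>z\<bar>)))" for u
  have "(X \<longlongrightarrow> 0) at_top" using assms(1) unfolding unif_integrable_def X_def .
  then have "eventually (\<lambda>u. X u < ennreal \<eta>) at_top"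
    using assms(2) by (intro order_tendstoD(2)) auto
  then obtain U where U: "\<And>u. u \<ge> U \<Longrightarrow> X u < ennreal \<eta>"
    by (auto simp: eventually_at_top_linorder)
  show ?thesis
  proof (rule that[of "max U 0"])
    fix n :: nat assume n: "n \<ge> 1"
    let ?S = "{w::real. \<bar>w\<bar> \<ge> max U 0}"
    have "(\<integral>\<^sup>+ w. ennreal \<bar>w\<bar> * indicator ?S w \<partial>Zdist P n)
        = (\<integral>\<^sup>+ w. ennreal (pmf (Zdist P n) w * \<bar>w\<bar>) * indicator ?S w \<partial>count_space UNIV)"
      unfolding nn_integral_measure_pmf by (intro nn_integral_cong) (simp add: ennreal_mult mult.assoc)
    also have "\<dots> \<le> (\<Sum>\<^sub>\<infinity> w\<in>?S. ennreal (pmf (Zdist P n) w * \<bar>w\<bar>))"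
      by (rule nn_integral_indicator_le_infsum) simp
    also have "\<dots> \<le> X (max U 0)" unfolding X_def using n by (intro SUP_upper) auto
    also have "\<dots> \<le> ennreal \<eta>" using U[of "max U 0"] by simp
    finally show "(\<integral>\<^sup>+ w. ennreal \<bar>w\<bar> * indicator ?S w \<partial>Zdist P n) \<le> ennreal \<eta>" .
  qed simp
qed

text \<open>Split according to whether the normalised information density exceeds the level u.\<close>

lemma nn_integral_indicator_cond_info_le:
  fixes Q :: "('a \<times> 'b) pmf"
  assumes n: "n \<ge> 1" and u: "u \<ge> 0"
  shows "(\<integral>\<^sup>+ z. indicator B (fst z) * ennreal (cond_info Q (fst z) (snd z)) \<partial>Q)
     \<le> ennreal (real n) * (ennreal u * emeasure (map_pmf fst Q) B
        + (\<integral>\<^sup>+ w. ennreal \<bar>w\<bar> * indicator {w. \<bar>w\<bar> \<ge> u} w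
             \<partial>map_pmf (\<lambda>z. cond_info Q (fst z) (snd z) / real n) Q))"
proof -
  define Z where "Z z = cond_info Q (fst z) (snd z) / real n" for z
  let ?S = "{w::real. \<bar>w\<bar> \<ge> u}"
  have "(\<integral>\<^sup>+ z. indicator B (fst z) * ennreal (cond_info Q (fst z) (snd z)) \<partial>Q)
     \<le> (\<integral>\<^sup>+ z. ennreal (real n) * (ennreal u * indicator B (fst z) + ennreal \<bar>Z z\<bar> * indicator ?S (Z z)) \<partial>Q)"
  proof (intro nn_integral_mono)
    fix z
    have info: "cond_info Q (fst z) (snd z) = real n * Z z" using n by (simp add: Z_def)
    have "indicator B (fst z) * ennreal (Z z) \<le> ennreal u * indicator B (fst z) + ennreal \<bar>Z z\<bar> * indicator ?S (Z z)"
      by (cases "fst z \<in> B"; cases "u \<le> \<bar>Z z\<bar>") (auto simp: add_increasing add_increasing2 ennreal_leI)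
    then show "indicator B (fst z) * ennreal (cond_info Q (fst z) (snd z))
        \<le> ennreal (real n) * (ennreal u * indicator B (fst z) + ennreal \<bar>Z z\<bar> * indicator ?S (Z z))"
      unfolding info using mult_left_mono[of _ _ "ennreal (real n)"]
      by (simp add: ennreal_mult' mult.left_commute)
  qed
  also have "\<dots> = ennreal (real n) * (ennreal u * emeasure Q (fst -` B)
      + (\<integral>\<^sup>+ z. ennreal \<bar>Z z\<bar> * indicator ?S (Z z) \<partial>Q))"
  proof -
    have "(\<lambda>z. indicator B (fst z) :: ennreal) = indicator (fst -` B)"
      by (auto simp: indicator_def fun_eq_iff)
    then have "(\<integral>\<^sup>+ z. indicator B (fst z) \<partial>Q) = emeasure Q (fst -` B)"
      by (metis measurable_pmf_measure1 nn_integral_indicator sets_measure_pmf UNIV_I)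
    then show ?thesis by (simp add: nn_integral_cmult nn_integral_add)
  qed
  finally show ?thesis by (simp add: Z_def emeasure_map_pmf)
qed

lemma unif_integrable_info_bound:
  fixes P :: "nat \<Rightarrow> ('a \<times> 'b) pmf"
  assumes "unif_integrable P" and "\<eta> > 0"
  obtains u where "u \<ge> 0"
    "\<And>n B. n \<ge> 1 \<Longrightarrow> (\<integral>\<^sup>+ z. indicator B (fst z) * ennreal (cond_info (P n) (fst z) (snd z)) \<partial>P n)
            \<le> ennreal (real n * (u * measure (map_pmf fst (P n)) B + \<eta>))"
proof -
  obtain u where u: "u \<ge> 0"
    "\<And>n. n \<ge> 1 \<Longrightarrow> (\<integral>\<^sup>+ w. ennreal \<bar>w\<bar> * indicator {w. \<bar>w\<bar> \<ge> u} w \<partial>Zdist P n) \<le> ennreal \<eta>"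
    using unif_integrable_tail_le[OF assms] by blast
  show ?thesis
  proof (rule that[OF u(1)])
    fix n :: nat and B assume n: "n \<ge> 1"
    have "(\<integral>\<^sup>+ z. indicator B (fst z) * ennreal (cond_info (P n) (fst z) (snd z)) \<partial>P n)
        \<le> ennreal (real n) * (ennreal u * ennreal (measure (map_pmf fst (P n)) B) + ennreal \<eta>)"
      using nn_integral_indicator_cond_info_le[OF n u(1), where B=B and Q="P n"] u(2)[OF n]
      by (simp add: Zdist_eq measure_pmf.emeasure_eq_measure del: nn_integral_map_pmf)
        (meson add_left_mono mult_left_mono order_trans zero_le)
    also have "\<dots> = ennreal (real n * (u * measure (map_pmf fst (P n)) B + \<eta>))"
      using u(1) assms(2) by (simp add: ennreal_mult ennreal_plus)
    finally show "(\<integral>\<^sup>+ z. indicator B (fst z) * ennreal (cond_info (P n) (fst z) (snd z)) \<partial>P n)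
        \<le> ennreal (real n * (u * measure (map_pmf fst (P n)) B + \<eta>))" .
  qed
qed

section \<open>Mixtures of general sources\<close>

definition Hs_max_eps :: "real \<Rightarrow> (nat \<Rightarrow> ('x list \<times> 'y) pmf) \<Rightarrow> (nat \<Rightarrow> ('x list \<times> 'y) pmf)
    \<Rightarrow> (nat \<Rightarrow> ('x list \<times> 'y) pmf) \<Rightarrow> nat \<Rightarrow> real" where
  "Hs_max_eps \<epsilon> P1 P2 P n =
     (\<Sum>\<^sub>\<infinity> x\<in>{xs. length xs = n}. pmf (map_pmf fst (P n)) x * max (hbar \<epsilon> (P1 n) x) (hbar \<epsilon> (P2 n) x))"

locale mixed_sources =
  fixes P1 P2 P :: "nat \<Rightarrow> ('x::countable list \<times> 'y::countable list) pmf" and \<alpha>1 \<alpha>2 :: real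
  assumes src1: "is_source P1"
    and ui1: "unif_integrable P1" and ui2: "unif_integrable P2"
    and marg: "\<And>n. map_pmf fst (P1 n) = map_pmf fst (P2 n)"
    and a1: "\<alpha>1 > 0" and a2: "\<alpha>2 > 0" and a12: "\<alpha>1 + \<alpha>2 = 1"
    and mix: "\<And>n z. pmf (P n) z = \<alpha>1 * pmf (P1 n) z + \<alpha>2 * pmf (P2 n) z"
begin

lemma mixture_info_bounds_at:
  assumes \<eta>: "\<eta> > 0"
  obtains u where
    "\<And>n. n \<ge> 1 \<Longrightarrow> mixture_info_bounds (P1 n) (P2 n) (P n) \<alpha>1 \<alpha>2 {xs. length xs = n} (real n) u \<eta>"
proof -
  obtain u1 where u1: "u1 \<ge> 0"
    "\<And>n B. n \<ge> 1 \<Longrightarrow> (\<integral>\<^sup>+ z. indicator B (fst z) * ennreal (cond_info (P1 n) (fst z) (snd z)) \<partial>P1 n)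
            \<le> ennreal (real n * (u1 * measure (map_pmf fst (P1 n)) B + \<eta>))"
    using unif_integrable_info_bound[OF ui1 \<eta>] by blast
  obtain u2 where u2: "u2 \<ge> 0"
    "\<And>n B. n \<ge> 1 \<Longrightarrow> (\<integral>\<^sup>+ z. indicator B (fst z) * ennreal (cond_info (P2 n) (fst z) (snd z)) \<partial>P2 n)
            \<le> ennreal (real n * (u2 * measure (map_pmf fst (P2 n)) B + \<eta>))"
    using unif_integrable_info_bound[OF ui2 \<eta>] by blast
  have mono: "ennreal (real n * (v * p + \<eta>)) \<le> ennreal (real n * (max u1 u2 * p + \<eta>))"
    if "v \<le> max u1 u2" "p \<ge> 0" for n :: nat and v p
    using that by (intro ennreal_leI mult_left_mono add_right_mono mult_right_mono) auto
  show ?thesis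
  proof (rule that)
    fix n :: nat assume n: "n \<ge> 1"
    have outside: "pmf (map_pmf fst (P1 n)) x = 0" if "x \<notin> {xs. length xs = n}" for x
    proof -
      have "set_pmf (P1 n) \<subseteq> {(xs, ys). length xs = n \<and> length ys = n}"
        using src1 unfolding is_source_def by auto
      then have "x \<notin> set_pmf (map_pmf fst (P1 n))" using that by auto
      then show ?thesis by (meson set_pmf_iff)
    qed
    show "mixture_info_bounds (P1 n) (P2 n) (P n) \<alpha>1 \<alpha>2 {xs. length xs = n} (real n) (max u1 u2) \<eta>"
    proof unfold_locales
      fix B
      show "(\<integral>\<^sup>+ z. indicator B (fst z) * ennreal (cond_info (P1 n) (fst z) (snd z)) \<partial>P1 n)
          \<le> ennreal (real n * (max u1 u2 * measure (map_pmf fst (P1 n)) B + \<eta>))"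
        using u1(2)[OF n, of B] mono[of u1] by (auto intro: order_trans)
      show "(\<integral>\<^sup>+ z. indicator B (fst z) * ennreal (cond_info (P2 n) (fst z) (snd z)) \<partial>P2 n)
          \<le> ennreal (real n * (max u1 u2 * measure (map_pmf fst (P1 n)) B + \<eta>))"
        using u2(2)[OF n, of B] mono[of u2] by (auto simp: marg intro: order_trans)
    qed (use marg a1 a2 a12 mix outside u1(1) \<eta> in auto)
  qed
qed

lemma limsup_Hs_eps_antimono:
  assumes "0 < \<epsilon>" "\<epsilon> \<le> \<epsilon>'" "\<epsilon>' < 1"
  shows "limsup (\<lambda>n. ereal (Hs_eps \<epsilon>' P n / real n)) \<le> limsup (\<lambda>n. ereal (Hs_eps \<epsilon> P n / real n))"
proof (intro Limsup_mono eventually_sequentiallyI[of 1])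
  obtain u where u: "\<And>n. n \<ge> 1 \<Longrightarrow> mixture_info_bounds (P1 n) (P2 n) (P n) \<alpha>1 \<alpha>2 {xs. length xs = n} (real n) u 1"
    using mixture_info_bounds_at[of 1] by auto
  fix n :: nat assume "n \<ge> 1"
  then interpret mixture_info_bounds "P1 n" "P2 n" "P n" \<alpha>1 \<alpha>2 "{xs. length xs = n}" "real n" u 1
    by (rule u)
  show "ereal (Hs_eps \<epsilon>' P n / real n) \<le> ereal (Hs_eps \<epsilon> P n / real n)"
    unfolding Hs_eps_def using infsum_hbar_antimono[OF assms] by (simp add: divide_right_mono)
qed

lemma limsup_Hs_max_eps_antimono:
  assumes "0 < \<epsilon>" "\<epsilon> \<le> \<epsilon>'" "\<epsilon>' < 1"
  shows "limsup (\<lambda>n. ereal (Hs_max_eps \<epsilon>' P1 P2 P n / real n))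
      \<le> limsup (\<lambda>n. ereal (Hs_max_eps \<epsilon> P1 P2 P n / real n))"
proof (intro Limsup_mono eventually_sequentiallyI[of 1])
  obtain u where u: "\<And>n. n \<ge> 1 \<Longrightarrow> mixture_info_bounds (P1 n) (P2 n) (P n) \<alpha>1 \<alpha>2 {xs. length xs = n} (real n) u 1"
    using mixture_info_bounds_at[of 1] by auto
  fix n :: nat assume "n \<ge> 1"
  then interpret mixture_info_bounds "P1 n" "P2 n" "P n" \<alpha>1 \<alpha>2 "{xs. length xs = n}" "real n" u 1
    by (rule u)
  show "ereal (Hs_max_eps \<epsilon>' P1 P2 P n / real n) \<le> ereal (Hs_max_eps \<epsilon> P1 P2 P n / real n)"
    unfolding Hs_max_eps_def using infsum_max_hbar_antimono[OF assms] by (simp add: divide_right_mono)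
qed

text \<open>Both comparisons take t = n in the pointwise estimates, so that the price log n paid for
  comparing densities vanishes after normalisation by n.\<close>

lemma Hs_max_eps_le_Hs_eps:
  assumes e': "0 < \<epsilon>'" "\<epsilon>' < 1" and n: "n \<ge> 1" "real n \<ge> 2 / \<epsilon>'"
  shows "Hs_max_eps \<epsilon>' P1 P2 P n
      \<le> Hs_eps (min \<alpha>1 \<alpha>2 * \<epsilon>' / 2) P n + (log 2 (real n) - log 2 (min \<alpha>1 \<alpha>2) + 1)"
proof -
  define am where "am = min \<alpha>1 \<alpha>2"
  define \<epsilon> where "\<epsilon> = am * \<epsilon>' / 2"
  have am: "0 < am" "am \<le> \<alpha>1" "am \<le> \<alpha>2" "am \<le> 1/2" using a1 a2 a12 by (auto simp: am_def)
  have e: "0 < \<epsilon>" "\<epsilon> < 1"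
  proof -
    show "0 < \<epsilon>" using am e' by (simp add: \<epsilon>_def)
    have "am * \<epsilon>' \<le> 1/2 * 1" using am e' by (intro mult_mono) auto
    then show "\<epsilon> < 1" by (simp add: \<epsilon>_def)
  qed
  obtain u where "mixture_info_bounds (P1 n) (P2 n) (P n) \<alpha>1 \<alpha>2 {xs. length xs = n} (real n) u 1"
    using mixture_info_bounds_at[of 1] n(1) by auto
  then interpret mixture_info_bounds "P1 n" "P2 n" "P n" \<alpha>1 \<alpha>2 "{xs. length xs = n}" "real n" u 1 .
  have "1 / real n \<le> \<epsilon>' / 2" using n e' by (simp add: field_simps)
  then have "\<alpha> * (\<epsilon>' - 1 / real n) \<ge> \<epsilon>" if "am \<le> \<alpha>" for \<alpha>
    using mult_mono[OF that, of "\<epsilon>' / 2" "\<epsilon>' - 1 / real n"] that e' am by (simp add: \<epsilon>_def)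
  then show ?thesis
    unfolding Hs_eps_def Hs_max_eps_def
    using infsum_max_hbar_le_infsum_hbar[of "real n" \<epsilon> \<epsilon>'] e e' n am by (simp add: \<epsilon>_def am_def)
qed

lemma limsup_Hs_max_eps_le:
  assumes e': "0 < \<epsilon>'" "\<epsilon>' < 1"
  shows "limsup (\<lambda>n. ereal (Hs_max_eps \<epsilon>' P1 P2 P n / real n))
      \<le> limsup (\<lambda>n. ereal (Hs_eps (min \<alpha>1 \<alpha>2 * \<epsilon>' / 2) P n / real n))"
proof -
  define e where "e n = log 2 (real n) / real n + (1 - log 2 (min \<alpha>1 \<alpha>2)) * (1 / real n)" for n :: nat
  have "eventually (\<lambda>n. Hs_max_eps \<epsilon>' P1 P2 P n / real n
      \<le> Hs_eps (min \<alpha>1 \<alpha>2 * \<epsilon>' / 2) P n / real n + e n) sequentially"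
  proof (rule eventually_sequentiallyI[of "max 1 (nat \<lceil>2 / \<epsilon>'\<rceil>)"])
    fix n :: nat assume "n \<ge> max 1 (nat \<lceil>2 / \<epsilon>'\<rceil>)"
    then have n: "n \<ge> 1" "real n \<ge> 2 / \<epsilon>'" by (auto simp: nat_le_iff ceiling_le_iff)
    then show "Hs_max_eps \<epsilon>' P1 P2 P n / real n \<le> Hs_eps (min \<alpha>1 \<alpha>2 * \<epsilon>' / 2) P n / real n + e n"
      using divide_right_mono[OF Hs_max_eps_le_Hs_eps[OF e' n], of "real n"]
      by (simp add: e_def field_simps)
  qed
  moreover have "e \<longlonglongrightarrow> 0 + (1 - log 2 (min \<alpha>1 \<alpha>2)) * 0"
    unfolding e_def by (intro tendsto_intros)
  ultimately show ?thesis
    using Limsup_le_Limsup_add_tendsto by fastforce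
qed

lemma Hs_eps_le_Hs_max_eps:
  assumes e: "0 < \<epsilon>" "\<epsilon> < 1" and \<eta>: "\<eta> > 0"
  obtains u where "\<And>n. n \<ge> 1 \<Longrightarrow> Hs_eps \<epsilon> P n \<le> Hs_max_eps (\<epsilon>/2) P1 P2 P n
      + (log 2 (real n) - log 2 (min \<alpha>1 \<alpha>2) + 1)
      + ((real n * (u * (2 / (\<epsilon> * real n)) + \<eta>) - log 2 (min \<alpha>1 \<alpha>2) * (2 / (\<epsilon> * real n))
          + 1 / ln 2) / \<epsilon> + 2 / (\<epsilon> * real n))"
proof -
  obtain u where u: "\<And>n. n \<ge> 1 \<Longrightarrow> mixture_info_bounds (P1 n) (P2 n) (P n) \<alpha>1 \<alpha>2 {xs. length xs = n} (real n) u \<eta>"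
    using mixture_info_bounds_at[OF \<eta>] by auto
  show ?thesis
  proof (rule that)
    fix n :: nat assume n: "n \<ge> 1"
    interpret mixture_info_bounds "P1 n" "P2 n" "P n" \<alpha>1 \<alpha>2 "{xs. length xs = n}" "real n" u \<eta>
      using u n .
    show "Hs_eps \<epsilon> P n \<le> Hs_max_eps (\<epsilon>/2) P1 P2 P n
      + (log 2 (real n) - log 2 (min \<alpha>1 \<alpha>2) + 1)
      + ((real n * (u * (2 / (\<epsilon> * real n)) + \<eta>) - log 2 (min \<alpha>1 \<alpha>2) * (2 / (\<epsilon> * real n))
          + 1 / ln 2) / \<epsilon> + 2 / (\<epsilon> * real n))"
      unfolding Hs_eps_def Hs_max_eps_def using infsum_hbar_le_infsum_max_hbar[of "real n" \<epsilon>] e n by simp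
  qed
qed

lemma limsup_Hs_eps_le:
  assumes e: "0 < \<epsilon>" "\<epsilon> < 1"
  shows "limsup (\<lambda>n. ereal (Hs_eps \<epsilon> P n / real n))
      \<le> limsup (\<lambda>n. ereal (Hs_max_eps (\<epsilon>/2) P1 P2 P n / real n))"
proof (rule ereal_le_epsilon2)
  fix \<delta> :: real assume \<delta>: "0 < \<delta>"
  define \<eta> where "\<eta> = \<delta> * \<epsilon>"
  obtain u where u: "\<And>n. n \<ge> 1 \<Longrightarrow> Hs_eps \<epsilon> P n \<le> Hs_max_eps (\<epsilon>/2) P1 P2 P n
      + (log 2 (real n) - log 2 (min \<alpha>1 \<alpha>2) + 1)
      + ((real n * (u * (2 / (\<epsilon> * real n)) + \<eta>) - log 2 (min \<alpha>1 \<alpha>2) * (2 / (\<epsilon> * real n))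
          + 1 / ln 2) / \<epsilon> + 2 / (\<epsilon> * real n))"
    using Hs_eps_le_Hs_max_eps[OF e, of \<eta>] \<delta> e by (auto simp: \<eta>_def)
  define C where "C = - log 2 (min \<alpha>1 \<alpha>2)"
  define K1 where "K1 = 1 + C + 2 * u / \<epsilon>^2 + 1 / (\<epsilon> * ln 2)"
  define K2 where "K2 = 2 * C / \<epsilon>^2 + 2 / \<epsilon>"
  define e where "e n = log 2 (real n) / real n + K1 * (1 / real n) + K2 * (1 / real n)^2 + \<eta> / \<epsilon>"
    for n :: nat
  have "eventually (\<lambda>n. Hs_eps \<epsilon> P n / real n \<le> Hs_max_eps (\<epsilon>/2) P1 P2 P n / real n + e n) sequentially"
  proof (rule eventually_sequentiallyI[of 1])
    fix n :: nat assume n: "n \<ge> 1"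
    have "e n = ((log 2 (real n) + C + 1) + ((real n * (u * (2 / (\<epsilon> * real n)) + \<eta>)
        + C * (2 / (\<epsilon> * real n)) + 1 / ln 2) / \<epsilon> + 2 / (\<epsilon> * real n))) / real n"
      unfolding e_def K1_def K2_def using n e by (simp add: field_simps power2_eq_square)
    then show "Hs_eps \<epsilon> P n / real n \<le> Hs_max_eps (\<epsilon>/2) P1 P2 P n / real n + e n"
      using divide_right_mono[OF u[OF n], of "real n"] n
      by (simp add: C_def add.assoc add_divide_distrib[symmetric])
  qed
  moreover have "e \<longlonglongrightarrow> 0 + K1 * 0 + K2 * 0\<^sup>2 + \<eta> / \<epsilon>"
    unfolding e_def by (intro tendsto_intros)
  ultimately have "limsup (\<lambda>n. ereal (Hs_eps \<epsilon> P n / real n))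
      \<le> limsup (\<lambda>n. ereal (Hs_max_eps (\<epsilon>/2) P1 P2 P n / real n)) + ereal (\<eta> / \<epsilon>)"
    by (intro Limsup_le_Limsup_add_tendsto) simp_all
  then show "limsup (\<lambda>n. ereal (Hs_eps \<epsilon> P n / real n))
      \<le> limsup (\<lambda>n. ereal (Hs_max_eps (\<epsilon>/2) P1 P2 P n / real n)) + ereal \<delta>"
    using e by (simp add: \<eta>_def)
qed

end

theorem theorem13:
  fixes P1 P2 P :: "nat \<Rightarrow> ('x::countable list \<times> 'y::countable list) pmf"
    and \<alpha>1 \<alpha>2 :: real
  assumes src1: "is_source P1" and src2: "is_source P2"
    and ui1: "unif_integrable P1" and ui2: "unif_integrable P2"
    and marg: "\<forall>n. map_pmf fst (P1 n) = map_pmf fst (P2 n)"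
    and a1: "\<alpha>1 > 0" and a2: "\<alpha>2 > 0" and a12: "\<alpha>1 + \<alpha>2 = 1"
    and mix: "\<forall>n z. pmf (P n) z = \<alpha>1 * pmf (P1 n) z + \<alpha>2 * pmf (P2 n) z"
  shows "Hs P = Lim (at_right (0::real)) (\<lambda>\<epsilon>. limsup (\<lambda>n. ereal
            ((\<Sum>\<^sub>\<infinity> x\<in>{xs. length xs = n}. pmf (map_pmf fst (P n)) x *
                 max (hbar \<epsilon> (P1 n) x) (hbar \<epsilon> (P2 n) x)) / real n)))"
proof -
  interpret mixed_sources P1 P2 P \<alpha>1 \<alpha>2
    using src1 ui1 ui2 marg a1 a2 a12 mix by unfold_locales auto
  have "Hs P = Lim (at_right 0) (\<lambda>\<epsilon>. limsup (\<lambda>n. ereal (Hs_eps \<epsilon> P n / real n)))"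
    unfolding Hs_def ..
  also have "\<dots> = Lim (at_right 0) (\<lambda>\<epsilon>. limsup (\<lambda>n. ereal (Hs_max_eps \<epsilon> P1 P2 P n / real n)))"
  proof (rule Lim_at_right_0_eq_if_interleaved)
    show "\<exists>\<epsilon>'\<in>{0<..<1}. limsup (\<lambda>n. ereal (Hs_eps \<epsilon> P n / real n))
        \<le> limsup (\<lambda>n. ereal (Hs_max_eps \<epsilon>' P1 P2 P n / real n))" if "\<epsilon> \<in> {0<..<1}" for \<epsilon>
      using that limsup_Hs_eps_le[of \<epsilon>] by (intro bexI[of _ "\<epsilon>/2"]) auto
    show "\<exists>\<epsilon>'\<in>{0<..<1}. limsup (\<lambda>n. ereal (Hs_max_eps \<epsilon> P1 P2 P n / real n))
        \<le> limsup (\<lambda>n. ereal (Hs_eps \<epsilon>' P n / real n))" if "\<epsilon> \<in> {0<..<1}" for \<epsilon>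
    proof (intro bexI[of _ "min \<alpha>1 \<alpha>2 * \<epsilon> / 2"])
      have "min \<alpha>1 \<alpha>2 * \<epsilon> \<le> 1 * 1" using that a1 a2 a12 by (intro mult_mono) auto
      then show "min \<alpha>1 \<alpha>2 * \<epsilon> / 2 \<in> {0<..<1}" using that a1 a2 by auto
    qed (use that limsup_Hs_max_eps_le in auto)
  qed (simp_all add: limsup_Hs_eps_antimono limsup_Hs_max_eps_antimono)
  finally show ?thesis unfolding Hs_max_eps_def .
qed

end
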